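(* Let $g:\{0,1\}^{\ell}\to\{0,1\}^{\ell}$ be a kernel of dimension $\ell\ge 2$ and let $\mathcal{W}$ be a binary-input memoryless channel. Suppose there exists ${\bf u}_0^{\ell-2}\in\{0,1\}^{\ell-1}$ such that $d_H\big(g({\bf u}_0^{\ell-2}\bullet 0),\,g({\bf u}_0^{\ell-2}\bullet 1)\big)\ge 2$. Then the sequence $\{I_n\}_{n\ge 0}$ converges almost surely to a random variable $I_\infty$ with $I_\infty\in\{0,1\}$ almost surely and $\Pr(I_\infty=1)=I(\mathcal{W})$.
   Context: A kernel of dimension $\ell$ is a bijection $g:\{0,1\}^\ell\to\{0,1\}^\ell$; write $g({\bf u})=(g_0({\bf u}),\dots,g_{\ell-1}({\bf u}))$. ${\bf a}\bullet{\bf b}$ denotes concatenation of vectors, $d_H$ is Hamming distance. For a binary-input memoryless channel $\mathcal{W}$ with transition probabilities $\mathcal{W}(y\mid x)$, $I(\mathcal{W})$ denotes its symmetric capacity (mutual information between a uniformly distributed input and the output) and $Z(\mathcal{W})=\sum_y\sqrt{\mathcal{W}(y\mid 0)\mathcal{W}(y\mid 1)}$ its Bhattacharyya parameter. For $i\in\{0,\dots,\ell-1\}$, the synthetic channel $\mathcal{W}^{(i)}$ (depending on $g$) has input $u_i\in\{0,1\}$, output $({\bf y}_0^{\ell-1},{\bf u}_0^{i-1})$ and transition probabilities $\mathcal{W}^{(i)}({\bf y},{\bf u}_0^{i-1}\mid u_i)=2^{-(\ell-1)}\sum_{{\bf u}_{i+1}^{\ell-1}\in\{0,1\}^{\ell-i-1}}\prod_{j=0}^{\ell-1}\mathcal{W}(y_j\mid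 g_j({\bf u}_0^{\ell-1}))$. Let $B_1,B_2,\dots$ be i.i.d. uniform on $\{0,\dots,\ell-1\}$, and define the random channel sequence $W_0=\mathcal{W}$, $W_{n+1}=W_n^{(B_{n+1})}$ (the synthetic channel construction applied to $W_n$), with $I_n=I(W_n)$ and $Z_n=Z(W_n)$. *)

theory Defs
  imports "HOL-Probability.Probability"
begin

text \<open>A binary-input memoryless channel with discrete output alphabet 'o is a function
  W :: bool \<Rightarrow> 'o \<Rightarrow> real, W x y = W(y|x).\<close>

definition is_channel :: "(bool \<Rightarrow> 'o \<Rightarrow> real) \<Rightarrow> bool" where
  "is_channel W \<longleftrightarrow> (\<forall>x y. 0 \<le> W x y) \<and> (\<forall>x. ((\<lambda>y. W x y) has_sum 1) UNIV)"

definition is_kernel :: "nat \<Rightarrow> (bool list \<Rightarrow> bool list) \<Rightarrow> bool" where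
  "is_kernel l g \<longleftrightarrow> bij_betw g {u. length u = l} {u. length u = l}"

definition hamming :: "bool list \<Rightarrow> bool list \<Rightarrow> nat" where
  "hamming a b = card {j. j < length a \<and> j < length b \<and> a ! j \<noteq> b ! j}"

definition sym_cap :: "(bool \<Rightarrow> 'o \<Rightarrow> real) \<Rightarrow> real" where
  "sym_cap W = (\<Sum>\<^sub>\<infinity> y. \<Sum>x\<in>{False, True}.
      (if W x y = 0 then 0
       else (1/2) * W x y * log 2 (W x y / ((1/2) * W False y + (1/2) * W True y))))"

definition bhattacharyya :: "(bool \<Rightarrow> 'o \<Rightarrow> real) \<Rightarrow> real" where
  "bhattacharyya W = (\<Sum>\<^sub>\<infinity> y. sqrt (W False y * W True y))"

text \<open>A universal output alphabet closed under the synthetic channel construction: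
  Base y is an original output, Node ys us is the output (y_0^{l-1}, u_0^{i-1}).\<close>
datatype 'y out = Base 'y | Node "'y out list" "bool list"

definition lift_chan :: "(bool \<Rightarrow> 'y \<Rightarrow> real) \<Rightarrow> bool \<Rightarrow> 'y out \<Rightarrow> real" where
  "lift_chan W x z = (case z of Base y \<Rightarrow> W x y | Node _ _ \<Rightarrow> 0)"

definition synth :: "nat \<Rightarrow> (bool list \<Rightarrow> bool list) \<Rightarrow> nat
    \<Rightarrow> (bool \<Rightarrow> 'y out \<Rightarrow> real) \<Rightarrow> bool \<Rightarrow> 'y out \<Rightarrow> real" where
  "synth l g i W ui z = (case z of
     Base _ \<Rightarrow> 0
   | Node ys us \<Rightarrow>
       (if length ys = l \<and> length us = i then
          (1 / 2 ^ (l - 1)) * (\<Sum>v\<in>{v. length v = l - i - 1}.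
              \<Prod>j<l. W (g (us @ [ui] @ v) ! j) (ys ! j))
        else 0))"

primrec chan_seq :: "nat \<Rightarrow> (bool list \<Rightarrow> bool list) \<Rightarrow> (bool \<Rightarrow> 'y \<Rightarrow> real)
    \<Rightarrow> (nat \<Rightarrow> 'a \<Rightarrow> nat) \<Rightarrow> 'a \<Rightarrow> nat \<Rightarrow> bool \<Rightarrow> 'y out \<Rightarrow> real" where
  "chan_seq l g W B \<omega> 0 = lift_chan W"
| "chan_seq l g W B \<omega> (Suc n) = synth l g (B (Suc n) \<omega>) (chan_seq l g W B \<omega> n)"

end

theory Submission
  imports Defs
begin

text \<open>The capacities \<open>I\<^sub>n\<close> are the values of a function \<open>f\<close> along a uniformly random path in the \<open>l\<close>-ary
  tree of index sequences, and by the chain rule the average of \<open>f\<close> over the children of a node is its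
  value at the node; so the expected squared increments of \<open>I\<^sub>n\<close> are summable, and by Borel--Cantelli
  the increments eventually become arbitrarily small.  The Hamming-distance hypothesis makes the last
  child strictly better: if \<open>d \<le> I(W) \<le> 1 - d\<close>, then \<open>I(W^(l-1)) \<ge> I(W) + \<kappa>(d)\<close>, by a quantitative
  data-processing inequality for \<open>x log x\<close> and a lower bound on the overlap of \<open>W(\<cdot>|0)\<close> and \<open>W(\<cdot>|1)\<close>.
  Hence every visit of \<open>I\<^sub>n\<close> to \<open>[d, 1 - d]\<close> forces a squared increment of at least \<open>\<kappa>\<^sup>2/l\<close> on average, so
  almost surely \<open>I\<^sub>n\<close> eventually avoids each such interval; with vanishing increments it converges to
  0 or 1.  Since \<open>E I\<^sub>n = I(W)\<close>, dominated convergence gives \<open>P(I\<^sub>\<infinity> = 1) = I(W)\<close>.\<close>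

section \<open>The function x log x\<close>

definition xlog :: "real \<Rightarrow> real" where
  "xlog x = x * log 2 x"

definition xlog_gap :: "real \<Rightarrow> real \<Rightarrow> real" where
  "xlog_gap p q = xlog p + xlog q - xlog (p + q)"

text \<open>For an output \<open>y\<close> with likelihoods \<open>P = W(y|0)\<close>, \<open>Q = W(y|1)\<close> this is the contribution of \<open>y\<close>
  to the symmetric capacity.\<close>
definition cap_term :: "real \<Rightarrow> real \<Rightarrow> real" where
  "cap_term P Q = (P + Q) / 2 + xlog_gap P Q / 2"

lemma xlog_0 [simp]: "xlog 0 = 0" and xlog_1 [simp]: "xlog 1 = 0"
  by (auto simp: xlog_def)

lemma xlog_ge_tangent:
  assumes "x \<ge> 0" "z > 0"
  shows "xlog x - x * log 2 z \<ge> (x - z) / ln 2"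
proof (cases "x = 0")
  case True
  thus ?thesis using assms by (simp add: divide_nonpos_pos)
next
  case False
  hence x: "x > 0" using assms by auto
  have "ln (z/x) \<le> z/x - 1" using ln_le_minus_one[of "z/x"] x assms by auto
  hence "ln (x/z) \<ge> 1 - z/x" using x assms by (simp add: ln_div)
  hence "x * ln (x/z) \<ge> x * (1 - z/x)" using x by (intro mult_left_mono) auto
  also have "x * (1 - z/x) = x - z" using x by (simp add: field_simps)
  finally have *: "x * ln (x/z) \<ge> x - z" .
  have "xlog x - x * log 2 z = x * ln (x/z) / ln 2"
    using x assms by (simp add: xlog_def log_def ln_div field_simps)
  thus ?thesis using * by (simp add: divide_right_mono)
qed

lemma xlog_mult:
  assumes "a \<ge> 0" "b \<ge> 0"
  shows "xlog (a * b) = a * xlog b + b * xlog a"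
  using assms by (cases "a = 0"; cases "b = 0") (auto simp: xlog_def log_mult algebra_simps)

lemma xlog_half:
  assumes "s \<ge> 0"
  shows "xlog (s / 2) = xlog s / 2 - s / 2"
  using assms by (cases "s = 0") (auto simp: xlog_def log_divide algebra_simps)

lemma xlog_convex:
  assumes "x \<ge> 0" "y \<ge> 0" "0 \<le> t" "t \<le> 1"
  shows "xlog (t * x + (1 - t) * y) \<le> t * xlog x + (1 - t) * xlog y"
proof -
  define z where "z = t * x + (1 - t) * y"
  have z0: "z \<ge> 0" using assms by (simp add: z_def)
  show ?thesis
  proof (cases "z = 0")
    case True
    hence "t * x = 0" "(1 - t) * y = 0" using assms z_def
      by (smt (verit) mult_nonneg_nonneg)+
    hence "t * xlog x = 0" "(1 - t) * xlog y = 0" by (metis mult.assoc mult_zero_left xlog_def)+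
    moreover have "xlog (t * x + (1 - t) * y) = 0" using True z_def by simp
    ultimately show ?thesis by linarith
  next
    case False
    hence z: "z > 0" using z0 by auto
    have "t * (xlog x - x * log 2 z) \<ge> t * ((x - z) / ln 2)"
      using xlog_ge_tangent[OF assms(1) z] assms by (intro mult_left_mono) auto
    moreover have "(1 - t) * (xlog y - y * log 2 z) \<ge> (1 - t) * ((y - z) / ln 2)"
      using xlog_ge_tangent[OF assms(2) z] assms by (intro mult_left_mono) auto
    moreover have "t * ((x - z) / ln 2) + (1 - t) * ((y - z) / ln 2) = 0"
      by (simp add: z_def field_simps)
    moreover have "xlog z = t * (x * log 2 z) + (1 - t) * (y * log 2 z)"
      by (simp add: xlog_def z_def algebra_simps)
    ultimately show ?thesis unfolding z_def[symmetric] by (simp add: algebra_simps)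
  qed
qed

lemma xlog_prod:
  assumes "finite K" "\<And>j. j \<in> K \<Longrightarrow> a j \<ge> 0"
  shows "xlog (\<Prod>j\<in>K. a j) = (\<Sum>k\<in>K. (\<Prod>j\<in>K - {k}. a j) * xlog (a k))"
  using assms
proof (induction K rule: finite_induct)
  case empty
  thus ?case by simp
next
  case (insert x F)
  have "xlog (\<Prod>j\<in>insert x F. a j) = a x * xlog (\<Prod>j\<in>F. a j) + (\<Prod>j\<in>F. a j) * xlog (a x)"
    using insert by (simp add: xlog_mult prod_nonneg)
  also have "\<dots> = (\<Sum>k\<in>F. a x * (\<Prod>j\<in>F - {k}. a j) * xlog (a k)) + (\<Prod>j\<in>F. a j) * xlog (a x)"
    using insert by (simp add: sum_distrib_left mult.assoc)
  also have "(\<Sum>k\<in>F. a x * (\<Prod>j\<in>F - {k}. a j) * xlog (a k))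
      = (\<Sum>k\<in>F. (\<Prod>j\<in>insert x F - {k}. a j) * xlog (a k))"
  proof (intro sum.cong refl)
    fix k assume "k \<in> F"
    hence "insert x F - {k} = insert x (F - {k})" "x \<notin> F - {k}" using insert by auto
    thus "a x * (\<Prod>j\<in>F - {k}. a j) * xlog (a k) = (\<Prod>j\<in>insert x F - {k}. a j) * xlog (a k)"
      using insert by simp
  qed
  also have "(\<Prod>j\<in>F. a j) = (\<Prod>j\<in>insert x F - {x}. a j)" using insert by simp
  finally show ?case using insert by (simp add: add.commute)
qed

lemma xlog_gap_commute: "xlog_gap p q = xlog_gap q p"
  by (simp add: xlog_gap_def add.commute)

lemma xlog_gap_0 [simp]: "xlog_gap 0 q = 0" "xlog_gap p 0 = 0"
  by (auto simp: xlog_gap_def)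

lemma xlog_gap_self: "a \<ge> 0 \<Longrightarrow> xlog_gap a a = - 2 * a"
  using xlog_mult[of 2 a] by (simp add: xlog_gap_def xlog_def[of 2])

lemma xlog_gap_nonpos:
  assumes "p \<ge> 0" "q \<ge> 0"
  shows "xlog_gap p q \<le> 0"
proof -
  have "xlog p \<le> p * log 2 (p + q)"
    using assms by (cases "p = 0") (auto simp: xlog_def intro!: mult_left_mono)
  moreover have "xlog q \<le> q * log 2 (p + q)"
    using assms by (cases "q = 0") (auto simp: xlog_def intro!: mult_left_mono)
  ultimately show ?thesis by (simp add: xlog_gap_def xlog_def algebra_simps)
qed

lemma xlog_gap_ge:
  assumes "p \<ge> 0" "q \<ge> 0"
  shows "xlog_gap p q \<ge> - (p + q)"
proof -
  have "xlog ((p + q) / 2) \<le> xlog p / 2 + xlog q / 2"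
    using xlog_convex[of p q "1/2"] assms by (simp add: add_divide_distrib)
  thus ?thesis using xlog_half[of "p + q"] assms unfolding xlog_gap_def by (simp add: field_simps)
qed

lemma abs_xlog_gap_le: "p \<ge> 0 \<Longrightarrow> q \<ge> 0 \<Longrightarrow> \<bar>xlog_gap p q\<bar> \<le> p + q"
  using xlog_gap_ge xlog_gap_nonpos by fastforce

lemma xlog_gap_cmult:
  assumes "c \<ge> 0" "p \<ge> 0" "q \<ge> 0"
  shows "xlog_gap (c * p) (c * q) = c * xlog_gap p q"
proof -
  have "xlog (c * (p + q)) = c * xlog (p + q) + (p + q) * xlog c"
    by (rule xlog_mult) (use assms in auto)
  thus ?thesis using assms by (simp add: xlog_gap_def xlog_mult algebra_simps)
qed

lemma cap_term_eq: "P \<ge> 0 \<Longrightarrow> Q \<ge> 0 \<Longrightarrow> cap_term P Q = (xlog P + xlog Q) / 2 - xlog ((P + Q) / 2)"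
  using xlog_half[of "P + Q"] by (simp add: cap_term_def xlog_gap_def field_simps)

lemma cap_term_nonneg: "P \<ge> 0 \<Longrightarrow> Q \<ge> 0 \<Longrightarrow> cap_term P Q \<ge> 0"
  using xlog_gap_ge[of P Q] by (simp add: cap_term_def field_simps)

lemma cap_term_le: "P \<ge> 0 \<Longrightarrow> Q \<ge> 0 \<Longrightarrow> cap_term P Q \<le> P + Q"
  using xlog_gap_nonpos[of P Q] by (simp add: cap_term_def field_simps)

lemma cap_term_commute: "cap_term P Q = cap_term Q P"
  by (simp add: cap_term_def xlog_gap_commute add.commute)

lemma xlog_mixture_excess_ge:
  assumes "p \<ge> 0" "q \<ge> 0" "P \<ge> 0" "Q \<ge> 0" "q \<le> p"
  shows "p * xlog P + q * xlog Q - xlog (p*P + q*Q) + (p*P + q*Q) * log 2 (p + q) \<ge> 2 * q * cap_term P Q"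
proof (cases "p + q = 0")
  case True
  hence "p = 0" "q = 0" using assms by auto
  thus ?thesis by simp
next
  case False
  define s where "s = p + q"
  have s: "s > 0" using False assms s_def by auto
  define t where "t = (p - q) / s"
  define M where "M = (P + Q) / 2"
  define R where "R = (p*P + q*Q) / s"
  have omt: "1 - t = 2 * q / s" using s by (simp add: t_def s_def field_simps)
  have R: "R = t * P + (1 - t) * M" unfolding omt using s
    by (simp add: R_def t_def M_def field_simps)
  have t: "0 \<le> t" "t \<le> 1" using assms s by (auto simp: t_def s_def)
  have cv: "xlog R \<le> t * xlog P + (1 - t) * xlog M"
    unfolding R by (rule xlog_convex) (use assms t in \<open>auto simp: M_def\<close>)
  have R0: "R \<ge> 0" using assms s by (simp add: R_def)
  have "xlog (p*P + q*Q) = xlog (s * R)" using s by (simp add: R_def)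
  also have "\<dots> = s * xlog R + R * xlog s" using s R0 by (simp add: xlog_mult)
  finally have e1: "xlog (p*P + q*Q) - (p*P + q*Q) * log 2 (p + q) = s * xlog R"
    using s by (simp add: R_def xlog_def s_def)
  have "s * xlog R \<le> s * (t * xlog P + (1 - t) * xlog M)" using cv s by (intro mult_left_mono) auto
  also have "\<dots> = (s * t) * xlog P + (s * (1 - t)) * xlog M" by (simp add: algebra_simps)
  also have "\<dots> = (p - q) * xlog P + 2 * q * xlog M" using s omt by (simp add: t_def)
  finally have "s * xlog R \<le> (p - q) * xlog P + 2 * q * xlog M" .
  moreover have cap: "2 * cap_term P Q = xlog P + xlog Q - 2 * xlog M"
    using cap_term_eq assms by (simp add: M_def)
  have "q * (2 * cap_term P Q) = q * xlog P + q * xlog Q - 2 * q * xlog M"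
    unfolding cap by (simp add: algebra_simps)
  ultimately show ?thesis using e1 by (simp add: algebra_simps)
qed

lemma xlog_gap_mult_ge:
  assumes "p \<ge> 0" "q \<ge> 0" "P \<ge> 0" "Q \<ge> 0"
  shows "xlog_gap (p*P) (q*Q) \<ge> P * xlog p + Q * xlog q - (p*P + q*Q) * log 2 (p + q)
    + 2 * min p q * cap_term P Q"
proof -
  have "p * xlog P + q * xlog Q - xlog (p*P + q*Q) + (p*P + q*Q) * log 2 (p + q) \<ge> 2 * min p q * cap_term P Q"
  proof (cases "q \<le> p")
    case True
    thus ?thesis using xlog_mixture_excess_ge[OF assms True] by simp
  next
    case False
    thus ?thesis using xlog_mixture_excess_ge[of q p Q P] assms
      by (simp add: min_def cap_term_commute algebra_simps)
  qed
  thus ?thesis using assms by (simp add: xlog_gap_def xlog_mult algebra_simps)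
qed

lemma ln_le_2_sqrt: "x > 0 \<Longrightarrow> ln x \<le> 2 * sqrt x"
  using ln_le_minus_one[of "sqrt x"] ln_sqrt[of x] by simp

lemma neg_xlog_gap_le_sqrt_smaller:
  assumes "q \<le> p" "q \<ge> 0"
  shows "- xlog_gap p q \<le> 3 / ln 2 * sqrt (q * (p + q))"
proof (cases "q = 0")
  case True
  thus ?thesis by simp
next
  case False
  hence q: "q > 0" using assms by auto
  hence p: "p > 0" using assms by auto
  define s where "s = p + q"
  have s: "s > 0" "q \<le> s" "p \<le> s" using p q by (auto simp: s_def)
  have "- xlog_gap p q = (p * ln (s/p) + q * ln (s/q)) / ln 2"
    using p q s by (simp add: xlog_gap_def xlog_def log_def ln_div s_def field_simps)
  moreover have "p * ln (s/p) \<le> q"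
  proof -
    have "p * ln (s/p) \<le> p * (s/p - 1)"
      using ln_le_minus_one[of "s/p"] p s by (intro mult_left_mono) auto
    thus ?thesis using p by (simp add: s_def field_simps)
  qed
  moreover have "q * ln (s/q) \<le> 2 * sqrt (q * s)"
  proof -
    have "q * ln (s/q) \<le> q * (2 * sqrt (s/q))"
      using ln_le_2_sqrt[of "s/q"] q s by (intro mult_left_mono) auto
    moreover have "q * sqrt (s/q) = sqrt (q * s)"
      using q s by (simp add: real_sqrt_divide real_sqrt_mult field_simps)
    ultimately show ?thesis by simp
  qed
  moreover have "q \<le> sqrt (q * s)"
    using q s by (intro real_le_rsqrt) (simp add: power2_eq_square mult_left_mono)
  ultimately have "- xlog_gap p q \<le> 3 * sqrt (q * s) / ln 2"
    by (simp add: divide_right_mono)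
  thus ?thesis by (simp add: s_def)
qed

lemma neg_xlog_gap_le_sqrt:
  assumes "p \<ge> 0" "q \<ge> 0"
  shows "- xlog_gap p q \<le> 3 / ln 2 * sqrt (min p q * (p + q))"
  using neg_xlog_gap_le_sqrt_smaller[of q p] neg_xlog_gap_le_sqrt_smaller[of p q] assms xlog_gap_commute[of p q]
  by (cases "q \<le> p") (auto simp: min_def add.commute)

lemma neg_xlog_gap_le_linear:
  assumes "p \<ge> 0" "q \<ge> 0" "e > 0"
  shows "- xlog_gap p q \<le> 3 / (2 * ln 2) * (e * (p + q) + min p q / e)"
proof -
  have "sqrt (min p q * (p + q)) = sqrt ((min p q / e) * (e * (p + q)))" using assms by simp
  also have "\<dots> \<le> ((min p q / e) + (e * (p + q))) / 2"
    by (rule arith_geo_mean_sqrt) (use assms in auto)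
  finally have "3 / ln 2 * sqrt (min p q * (p + q)) \<le> 3 / ln 2 * ((e * (p + q) + min p q / e) / 2)"
    by (intro mult_left_mono) auto
  also have "\<dots> = 3 / (2 * ln 2) * (e * (p + q) + min p q / e)"
    by simp
  finally show ?thesis using neg_xlog_gap_le_sqrt[OF assms(1,2)] by linarith
qed

lemma sym_cap_summand_eq_cap_term:
  assumes "p \<ge> 0" "q \<ge> 0"
  shows "(\<Sum>x\<in>{False, True}. (if (if x then q else p) = 0 then 0
       else (1/2) * (if x then q else p) * log 2 ((if x then q else p) / ((1/2) * p + (1/2) * q))))
     = cap_term p q"
proof -
  have t: "(if r = 0 then 0 else (1/2) * r * log 2 (r / ((1/2) * p + (1/2) * q)))
      = (xlog r - r * log 2 (p + q) + r) / 2" if "r \<ge> 0" "r \<le> p + q" for r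
  proof (cases "r = 0")
    case True
    thus ?thesis by simp
  next
    case False
    hence "r > 0" "p + q > 0" using that by auto
    thus ?thesis by (simp add: xlog_def log_divide field_simps log_mult)
  qed
  define f where "f r = (if r = 0 then 0 else (1/2) * r * log 2 (r / ((1/2) * p + (1/2) * q)))" for r
  have "(\<Sum>x\<in>{False, True}. (if (if x then q else p) = 0 then 0
       else (1/2) * (if x then q else p) * log 2 ((if x then q else p) / ((1/2) * p + (1/2) * q))))
     = f p + f q" by (simp add: f_def)
  also have "\<dots> = (xlog p - p * log 2 (p + q) + p) / 2 + (xlog q - q * log 2 (p + q) + q) / 2"
    using t[of p] t[of q] assms by (simp only: f_def)
  also have "\<dots> = cap_term p q"
    unfolding cap_term_def xlog_gap_def xlog_def by (simp add: field_simps)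
  finally show ?thesis .
qed

section \<open>Unconditional sums\<close>

lemma summable_on_dominated:
  fixes f :: "'a \<Rightarrow> real"
  assumes "g summable_on A" "\<And>x. x \<in> A \<Longrightarrow> \<bar>f x\<bar> \<le> g x"
  shows "f summable_on A"
proof -
  have "(\<lambda>x. \<bar>f x\<bar>) summable_on A"
    by (rule summable_on_comparison_test[OF assms(1)]) (use assms(2) in auto)
  thus ?thesis using summable_on_iff_abs_summable_on_real by (metis real_norm_def summable_on_cong)
qed

lemma has_sum_finite_sum:
  fixes f :: "'i \<Rightarrow> 'a \<Rightarrow> 'b::topological_comm_monoid_add"
  assumes "finite I" "\<And>i. i \<in> I \<Longrightarrow> (f i has_sum s i) A"
  shows "((\<lambda>x. \<Sum>i\<in>I. f i x) has_sum (\<Sum>i\<in>I. s i)) A"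
  using assms by (induction I rule: finite_induct) (auto intro!: has_sum_add)

lemma summable_on_finite_sum:
  fixes f :: "'i \<Rightarrow> 'a \<Rightarrow> 'b::topological_comm_monoid_add"
  assumes "finite I" "\<And>i. i \<in> I \<Longrightarrow> f i summable_on A"
  shows "(\<lambda>x. \<Sum>i\<in>I. f i x) summable_on A"
proof -
  obtain s where "\<And>i. i \<in> I \<Longrightarrow> (f i has_sum s i) A"
    using assms(2) unfolding summable_on_def by metis
  thus ?thesis using has_sum_finite_sum[OF assms(1)] unfolding summable_on_def by blast
qed

lemma infsum_finite_sum:
  fixes f :: "'i \<Rightarrow> 'a \<Rightarrow> 'b::{topological_comm_monoid_add, t2_space}"
  assumes "finite I" "\<And>i. i \<in> I \<Longrightarrow> f i summable_on A"
  shows "(\<Sum>\<^sub>\<infinity>x\<in>A. \<Sum>i\<in>I. f i x) = (\<Sum>i\<in>I. \<Sum>\<^sub>\<infinity>x\<in>A. f i x)"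
  using has_sum_finite_sum[where f=f and s="\<lambda>i. infsum (f i) A" and A=A] assms
  by (auto intro: infsumI)

lemma has_sum_diff:
  fixes f g :: "'a \<Rightarrow> 'b::topological_ab_group_add"
  assumes "(f has_sum a) A" "(g has_sum b) A"
  shows "((\<lambda>x. f x - g x) has_sum (a - b)) A"
proof -
  have "((\<lambda>x. - g x) has_sum - b) A" using assms(2) by (simp add: has_sum_uminus)
  thus ?thesis using has_sum_add[OF assms(1)] by fastforce
qed

lemma has_sum_Times_finite:
  fixes F :: "'a \<Rightarrow> 'b \<Rightarrow> 'c::topological_comm_monoid_add"
  assumes "finite B" "\<And>b. b \<in> B \<Longrightarrow> ((\<lambda>a. F a b) has_sum s b) A"
  shows "((\<lambda>(a,b). F a b) has_sum (\<Sum>b\<in>B. s b)) (A \<times> B)"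
  using assms
proof (induction B rule: finite_induct)
  case empty thus ?case by simp
next
  case (insert x B)
  have e: "A \<times> insert x B = (A \<times> {x}) \<union> (A \<times> B)" by auto
  have d: "(A \<times> {x}) \<inter> (A \<times> B) = {}" using insert by auto
  have h1: "((\<lambda>(a,b). F a b) has_sum s x) (A \<times> {x})"
  proof -
    have "((\<lambda>a. F a x) has_sum s x) A" using insert by auto
    moreover have "A \<times> {x} = (\<lambda>a. (a, x)) ` A" by auto
    moreover have "inj_on (\<lambda>a. (a, x)) A" by (auto simp: inj_on_def)
    ultimately show ?thesis by (simp add: has_sum_reindex o_def)
  qed
  have "((\<lambda>(a,b). F a b) has_sum (s x + (\<Sum>b\<in>B. s b))) (A \<times> {x} \<union> A \<times> B)"
    by (rule has_sum_Un_disjoint[OF h1 _ d]) (use insert in auto)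
  thus ?case using insert e by simp
qed

lemma PiE_insert_as_image:
  assumes "k \<notin> K"
  shows "PiE (insert k K) (\<lambda>_. UNIV) = (\<lambda>(h,y). h(k:=y)) ` (PiE K (\<lambda>_. UNIV) \<times> (UNIV :: 'b set))"
    and "inj_on (\<lambda>(h,y). h(k:=y)) (PiE K (\<lambda>_. UNIV) \<times> (UNIV :: 'b set))"
proof -
  show "PiE (insert k K) (\<lambda>_. UNIV) = (\<lambda>(h,y). h(k:=y)) ` (PiE K (\<lambda>_. UNIV) \<times> (UNIV :: 'b set))"
    unfolding PiE_insert_eq
    by (subst swap_product [symmetric]) (simp add: image_image case_prod_unfold)
  show "inj_on (\<lambda>(h,y). h(k:=y)) (PiE K (\<lambda>_. UNIV) \<times> (UNIV :: 'b set))"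
    using inj_combinator'[of k K "\<lambda>_. UNIV"] assms by simp
qed

lemma has_sum_prod_PiE_nonneg:
  fixes f :: "'k \<Rightarrow> 'b \<Rightarrow> real"
  assumes "finite K" "\<And>k. k \<in> K \<Longrightarrow> (f k has_sum s k) UNIV" "\<And>k y. k \<in> K \<Longrightarrow> f k y \<ge> 0"
  shows "((\<lambda>h. \<Prod>k\<in>K. f k (h k)) has_sum (\<Prod>k\<in>K. s k)) (PiE K (\<lambda>_. UNIV))"
  using assms
proof (induction K rule: finite_induct)
  case empty thus ?case by (simp add: has_sum_finite_iff)
next
  case (insert x F)
  note comb = PiE_insert_as_image[OF insert.hyps(2), where 'b='b]
  have IH: "((\<lambda>h. \<Prod>k\<in>F. f k (h k)) has_sum (\<Prod>k\<in>F. s k)) (PiE F (\<lambda>_. UNIV))"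
    using insert by auto
  have eq: "(\<lambda>h. \<Prod>k\<in>insert x F. f k (h k)) \<circ> (\<lambda>(h,y). h(x:=y))
      = (\<lambda>(h,y). f x y * (\<Prod>k\<in>F. f k (h k)))"
    using insert.hyps by (auto simp: fun_eq_iff intro!: prod.cong)
  have inner: "((\<lambda>y. f x y * (\<Prod>k\<in>F. f k (h k))) has_sum (s x * (\<Prod>k\<in>F. f k (h k)))) UNIV" for h
    using insert.prems(1)[of x] by (intro has_sum_cmult_left) auto
  have outer: "((\<lambda>h. s x * (\<Prod>k\<in>F. f k (h k))) has_sum (s x * (\<Prod>k\<in>F. s k))) (PiE F (\<lambda>_. UNIV))"
    by (intro has_sum_cmult_right IH)
  have summ: "(\<lambda>(h,y). f x y * (\<Prod>k\<in>F. f k (h k))) summable_on (PiE F (\<lambda>_. UNIV) \<times> UNIV)"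
  proof (rule summable_on_SigmaI[where g="\<lambda>h. s x * (\<Prod>k\<in>F. f k (h k))"])
    show "((\<lambda>y. (\<lambda>(h,y). f x y * (\<Prod>k\<in>F. f k (h k))) (h, y)) has_sum s x * (\<Prod>k\<in>F. f k (h k))) UNIV" for h
      using inner[of h] by simp
    show "(\<lambda>h. s x * (\<Prod>k\<in>F. f k (h k))) summable_on PiE F (\<lambda>_. UNIV)"
      using outer by (rule has_sum_imp_summable)
    show "0 \<le> (\<lambda>(h,y). f x y * (\<Prod>k\<in>F. f k (h k))) (h, y)" for h y
      using insert.prems(2) by (auto intro!: mult_nonneg_nonneg prod_nonneg)
  qed
  have "((\<lambda>(h,y). f x y * (\<Prod>k\<in>F. f k (h k))) has_sum (s x * (\<Prod>k\<in>F. s k))) (PiE F (\<lambda>_. UNIV) \<times> UNIV)"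
    using has_sum_SigmaI[where f="\<lambda>(h,y). f x y * (\<Prod>k\<in>F. f k (h k))", OF _ outer summ] inner
    by auto
  hence "(((\<lambda>h. \<Prod>k\<in>insert x F. f k (h k)) \<circ> (\<lambda>(h,y). h(x:=y))) has_sum (s x * (\<Prod>k\<in>F. s k)))
      (PiE F (\<lambda>_. UNIV) \<times> UNIV)" unfolding eq .
  hence "((\<lambda>h. \<Prod>k\<in>insert x F. f k (h k)) has_sum (s x * (\<Prod>k\<in>F. s k)))
     ((\<lambda>(h,y). h(x:=y)) ` (PiE F (\<lambda>_. UNIV) \<times> UNIV))"
    by (simp only: has_sum_reindex[OF comb(2)])
  hence "((\<lambda>h. \<Prod>k\<in>insert x F. f k (h k)) has_sum (s x * (\<Prod>k\<in>F. s k))) (PiE (insert x F) (\<lambda>_. UNIV))"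
    by (simp only: comb(1))
  thus ?case using insert.hyps by simp
qed

lemma has_sum_prod_PiE_abs:
  fixes f :: "'k \<Rightarrow> 'b \<Rightarrow> real"
  assumes "finite K" "\<And>k. k \<in> K \<Longrightarrow> (\<lambda>y. \<bar>f k y\<bar>) summable_on UNIV"
  shows "((\<lambda>h. \<Prod>k\<in>K. f k (h k)) has_sum (\<Prod>k\<in>K. infsum (f k) UNIV)) (PiE K (\<lambda>_. UNIV))"
proof -
  have "((\<lambda>h. \<Prod>k\<in>K. \<bar>f k (h k)\<bar>) has_sum (\<Prod>k\<in>K. infsum (\<lambda>y. \<bar>f k y\<bar>) UNIV)) (PiE K (\<lambda>_. UNIV))"
    using assms by (intro has_sum_prod_PiE_nonneg) auto
  hence "(\<lambda>h. \<Prod>k\<in>K. \<bar>f k (h k)\<bar>) summable_on (PiE K (\<lambda>_. UNIV))"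
    by (rule has_sum_imp_summable)
  hence "(\<lambda>h. \<Prod>k\<in>K. f k (h k)) summable_on (PiE K (\<lambda>_. UNIV))"
    by (rule summable_on_dominated) (simp add: abs_prod)
  moreover have "infsum (\<lambda>h. \<Prod>k\<in>K. f k (h k)) (PiE K (\<lambda>_. UNIV)) = (\<Prod>k\<in>K. infsum (f k) UNIV)"
    by (rule infsum_prod_PiE_abs[OF assms(1)]) (simp add: assms(2))
  ultimately show ?thesis by (metis has_sum_infsum)
qed

lemma bij_betw_nth_lists_PiE:
  "bij_betw (\<lambda>ys. restrict (\<lambda>j. ys ! j) {..<n}) {ys. length ys = n} (PiE {..<n} (\<lambda>_. UNIV))"
proof (rule bij_betwI[where g="\<lambda>h. map h [0..<n]"])
  show "(\<lambda>ys. restrict ((!) ys) {..<n}) \<in> {ys. length ys = n} \<rightarrow> PiE {..<n} (\<lambda>_. UNIV)" by auto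
  show "(\<lambda>h. map h [0..<n]) \<in> PiE {..<n} (\<lambda>_. UNIV) \<rightarrow> {ys. length ys = n}" by auto
  show "map (restrict ((!) x) {..<n}) [0..<n] = x" if "x \<in> {ys. length ys = n}" for x
    using that by (auto intro: nth_equalityI)
  show "restrict ((!) (map y [0..<n])) {..<n} = y" if "y \<in> PiE {..<n} (\<lambda>_. UNIV)" for y
    using that by (auto simp: fun_eq_iff PiE_def extensional_def)
qed

lemma has_sum_lists_iff_PiE:
  assumes "\<And>ys. length ys = n \<Longrightarrow> F ys = G (restrict (\<lambda>j. ys ! j) {..<n})"
  shows "(F has_sum s) {ys. length ys = n} \<longleftrightarrow> (G has_sum s) (PiE {..<n} (\<lambda>_. UNIV))"
proof -
  have "(F has_sum s) {ys. length ys = n} \<longleftrightarrow> ((\<lambda>ys. G (restrict (\<lambda>j. ys ! j) {..<n})) has_sum s) {ys. length ys = n}"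
    using assms by (intro has_sum_cong) auto
  also have "\<dots> \<longleftrightarrow> (G has_sum s) (PiE {..<n} (\<lambda>_. UNIV))"
    using has_sum_reindex_bij_betw[OF bij_betw_nth_lists_PiE] by blast
  finally show ?thesis .
qed

lemma has_sum_lists_prod_nonneg:
  fixes f :: "nat \<Rightarrow> 'b \<Rightarrow> real"
  assumes "\<And>k. k < n \<Longrightarrow> (f k has_sum s k) UNIV" "\<And>k y. k < n \<Longrightarrow> f k y \<ge> 0"
  shows "((\<lambda>ys. \<Prod>k<n. f k (ys ! k)) has_sum (\<Prod>k<n. s k)) {ys. length ys = n}"
  by (subst has_sum_lists_iff_PiE[where G="\<lambda>h. \<Prod>k<n. f k (h k)"])
     (auto intro!: has_sum_prod_PiE_nonneg assms prod.cong)

lemma has_sum_lists_prod_abs: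
  fixes f :: "nat \<Rightarrow> 'b \<Rightarrow> real"
  assumes "\<And>k. k < n \<Longrightarrow> (\<lambda>y. \<bar>f k y\<bar>) summable_on UNIV"
  shows "((\<lambda>ys. \<Prod>k<n. f k (ys ! k)) has_sum (\<Prod>k<n. infsum (f k) UNIV)) {ys. length ys = n}"
  by (subst has_sum_lists_iff_PiE[where G="\<lambda>h. \<Prod>k<n. f k (h k)"])
     (auto intro!: has_sum_prod_PiE_abs assms prod.cong)

section \<open>Pairs of probability mass functions\<close>

definition prob_pair :: "('b \<Rightarrow> real) \<Rightarrow> ('b \<Rightarrow> real) \<Rightarrow> bool" where
  "prob_pair A B \<longleftrightarrow> (\<forall>y. A y \<ge> 0 \<and> B y \<ge> 0) \<and> (A has_sum 1) UNIV \<and> (B has_sum 1) UNIV"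

definition pair_cap :: "('b \<Rightarrow> real) \<Rightarrow> ('b \<Rightarrow> real) \<Rightarrow> real" where
  "pair_cap A B = (\<Sum>\<^sub>\<infinity>y. cap_term (A y) (B y))"

lemma is_channel_iff_prob_pair: "is_channel V \<longleftrightarrow> prob_pair (V False) (V True)"
  unfolding is_channel_def prob_pair_def by (metis (full_types))

lemma prob_pair_rows: "prob_pair (C False) (C True) \<Longrightarrow> prob_pair (C a) (C b)"
  unfolding prob_pair_def by (cases a; cases b) auto

lemma sym_cap_eq_pair_cap:
  assumes "\<And>x y. V x y \<ge> 0"
  shows "sym_cap V = pair_cap (V False) (V True)"
  unfolding sym_cap_def pair_cap_def
proof (intro infsum_cong)
  fix y
  have "(\<Sum>x\<in>{False, True}. f x) = f False + f True" for f :: "bool \<Rightarrow> real"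
    by simp
  thus "(\<Sum>x\<in>{False, True}. if V x y = 0 then 0
          else 1 / 2 * V x y * log 2 (V x y / (1 / 2 * V False y + 1 / 2 * V True y)))
      = cap_term (V False y) (V True y)"
    using sym_cap_summand_eq_cap_term[of "V False y" "V True y", OF assms assms]
    by (simp only: if_True if_False)
qed

lemma has_sum_add_pair:
  assumes "prob_pair A B"
  shows "((\<lambda>y. p * A y + q * B y) has_sum (p + q)) UNIV"
  using assms has_sum_add[OF has_sum_cmult_right[of A UNIV 1 p] has_sum_cmult_right[of B UNIV 1 q]]
  by (simp add: prob_pair_def)

lemma cap_term_summable:
  assumes "prob_pair A B"
  shows "(\<lambda>y. cap_term (A y) (B y)) summable_on UNIV"
proof (rule summable_on_dominated)
  show "(\<lambda>y. 1 * A y + 1 * B y) summable_on UNIV"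
    using has_sum_add_pair[OF assms] by (rule has_sum_imp_summable)
  show "\<bar>cap_term (A y) (B y)\<bar> \<le> 1 * A y + 1 * B y" for y
    using assms cap_term_nonneg cap_term_le by (simp add: prob_pair_def)
qed

lemma pair_cap_nonneg: "prob_pair A B \<Longrightarrow> pair_cap A B \<ge> 0"
  unfolding pair_cap_def prob_pair_def by (intro infsum_nonneg cap_term_nonneg) auto

lemma pair_cap_commute: "pair_cap A B = pair_cap B A"
  unfolding pair_cap_def by (simp add: cap_term_commute)

lemma pair_cap_rows:
  assumes "prob_pair (C False) (C True)" "a \<noteq> b"
  shows "pair_cap (C a) (C b) = pair_cap (C False) (C True)"
  using assms pair_cap_commute by (cases a; cases b) auto

lemma has_sum_xlog_gap_pair_cap:
  assumes "prob_pair A B"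
  shows "((\<lambda>y. xlog_gap (A y) (B y)) has_sum (2 * pair_cap A B - 2)) UNIV"
proof -
  have "((\<lambda>y. cap_term (A y) (B y)) has_sum pair_cap A B) UNIV"
    unfolding pair_cap_def using cap_term_summable[OF assms] by auto
  hence "((\<lambda>y. 2 * cap_term (A y) (B y) - (1 * A y + 1 * B y)) has_sum (2 * pair_cap A B - (1 + 1))) UNIV"
    by (intro has_sum_diff has_sum_cmult_right has_sum_add_pair assms)
  thus ?thesis by (simp add: cap_term_def field_simps)
qed

lemma pair_cap_le_1:
  assumes "prob_pair A B"
  shows "pair_cap A B \<le> 1"
  using has_sum_mono[OF has_sum_xlog_gap_pair_cap[OF assms], of "\<lambda>_. 0" 0] xlog_gap_nonpos assms
  by (auto simp: prob_pair_def)

lemma overlap_ge_if_pair_cap_le: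
  assumes ch: "prob_pair A B" and d: "d > 0" and K: "pair_cap A B \<le> 1 - d"
  shows "(\<Sum>\<^sub>\<infinity>y. min (A y) (B y)) \<ge> d^2 * (2 * (ln 2)^2 / 9)"
proof -
  have A1: "(A has_sum 1) UNIV" and A0: "\<And>y. A y \<ge> 0" and B0: "\<And>y. B y \<ge> 0"
    using ch by (auto simp: prob_pair_def)
  define c :: real where "c = 3 / (2 * ln 2)"
  have c: "c > 0" by (simp add: c_def)
  \<comment> \<open>the optimal choice of \<open>e\<close> in \<open>neg_xlog_gap_le_linear\<close>\<close>
  define e :: real where "e = d / (2 * c)"
  have e: "e > 0" using c d by (simp add: e_def)
  have sm: "(\<lambda>y. min (A y) (B y)) summable_on UNIV"
    by (rule summable_on_dominated[where g=A]) (use A1 A0 B0 in \<open>auto simp: summable_on_def\<close>)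
  define Pm where "Pm = (\<Sum>\<^sub>\<infinity>y. min (A y) (B y))"
  have hr: "((\<lambda>y. c * (e * (1 * A y + 1 * B y) + min (A y) (B y) / e)) has_sum (c * (e * (1 + 1) + Pm / e))) UNIV"
    by (intro has_sum_cmult_right has_sum_add has_sum_divide_const has_sum_add_pair ch)
       (use sm Pm_def in auto)
  have hl: "((\<lambda>y. - xlog_gap (A y) (B y)) has_sum (- (2 * pair_cap A B - 2))) UNIV"
    using has_sum_uminusI[OF has_sum_xlog_gap_pair_cap[OF ch]] .
  have "- (2 * pair_cap A B - 2) \<le> c * (e * (1 + 1) + Pm / e)"
    by (rule has_sum_mono[OF hl hr]) (use neg_xlog_gap_le_linear A0 B0 e c_def in auto)
  hence "2 * d \<le> c * (2 * e) + c * Pm / e" using K by (simp add: algebra_simps)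
  moreover have "c * (2 * e) = d" using c by (simp add: e_def)
  ultimately have "d \<le> c * Pm / e" by simp
  hence "d * e / c \<le> Pm" using c e by (simp add: field_simps)
  moreover have "d * e / c = d^2 * (2 * (ln 2)^2 / 9)"
    by (simp add: e_def c_def power2_eq_square field_simps)
  ultimately show ?thesis by (simp add: Pm_def)
qed

text \<open>Quantitative data processing: refining an output with likelihoods \<open>p, q\<close> by a further observation
  with laws \<open>A, B\<close>.\<close>
lemma xlog_gap_refine_ge:
  assumes ch: "prob_pair A B" and p: "p \<ge> 0" and q: "q \<ge> 0"
  shows "(\<lambda>y. xlog_gap (p * A y) (q * B y)) summable_on UNIV"
    and "(\<Sum>\<^sub>\<infinity>y. xlog_gap (p * A y) (q * B y)) \<ge> xlog_gap p q + 2 * min p q * pair_cap A B"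
proof -
  have A1: "(A has_sum 1) UNIV" and B1: "(B has_sum 1) UNIV" and A0: "\<And>y. A y \<ge> 0" and B0: "\<And>y. B y \<ge> 0"
    using ch by (auto simp: prob_pair_def)
  show sE: "(\<lambda>y. xlog_gap (p * A y) (q * B y)) summable_on UNIV"
    by (rule summable_on_dominated[where g="\<lambda>y. p * A y + q * B y"])
       (use has_sum_add_pair[OF ch] in \<open>auto simp: summable_on_def intro!: abs_xlog_gap_le mult_nonneg_nonneg A0 B0 p q\<close>)
  have hK: "((\<lambda>y. 2 * min p q * cap_term (A y) (B y)) has_sum (2 * min p q * pair_cap A B)) UNIV"
    unfolding pair_cap_def by (intro has_sum_cmult_right) (use cap_term_summable[OF ch] in auto)
  have "((\<lambda>y. A y * xlog p + B y * xlog q - (p * A y + q * B y) * log 2 (p + q)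
        + 2 * min p q * cap_term (A y) (B y))
      has_sum (1 * xlog p + 1 * xlog q - (p + q) * log 2 (p + q) + 2 * min p q * pair_cap A B)) UNIV"
    by (intro has_sum_add has_sum_diff has_sum_cmult_left A1 B1 hK has_sum_add_pair ch)
  hence "((\<lambda>y. A y * xlog p + B y * xlog q - (p * A y + q * B y) * log 2 (p + q)
        + 2 * min p q * cap_term (A y) (B y))
      has_sum (xlog_gap p q + 2 * min p q * pair_cap A B)) UNIV"
    by (simp add: xlog_gap_def xlog_def distrib_right)
  thus "(\<Sum>\<^sub>\<infinity>y. xlog_gap (p * A y) (q * B y)) \<ge> xlog_gap p q + 2 * min p q * pair_cap A B"
    using has_sum_mono[OF _ has_sum_infsum[OF sE]] xlog_gap_mult_ge[OF p q A0 B0] by blast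
qed

lemma infsum_xlog_gap_refine_ge:
  fixes p q :: "'z \<Rightarrow> real"
  assumes ch: "prob_pair A B" and p0: "\<And>z. z \<in> S \<Longrightarrow> p z \<ge> 0" and q0: "\<And>z. z \<in> S \<Longrightarrow> q z \<ge> 0"
    and ps: "p summable_on S" and qs: "q summable_on S"
  shows "(\<Sum>\<^sub>\<infinity>(z,y)\<in>S \<times> UNIV. xlog_gap (p z * A y) (q z * B y))
      \<ge> (\<Sum>\<^sub>\<infinity>z\<in>S. xlog_gap (p z) (q z)) + 2 * pair_cap A B * (\<Sum>\<^sub>\<infinity>z\<in>S. min (p z) (q z))"
proof -
  have A0: "\<And>y. A y \<ge> 0" and B0: "\<And>y. B y \<ge> 0"
    using ch by (auto simp: prob_pair_def)
  have pqs: "(\<lambda>z. p z + q z) summable_on S" using ps qs by (rule summable_on_add)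
  have bnd: "(\<lambda>(z,y). p z * A y + q z * B y) summable_on (S \<times> UNIV)"
    using summable_on_SigmaI[where A=S and B="\<lambda>_. UNIV" and f="\<lambda>(z,y). p z * A y + q z * B y"
        and g="\<lambda>z. p z + q z"] has_sum_add_pair[OF ch] pqs p0 q0 A0 B0 by auto
  have sm: "(\<lambda>(z,y). xlog_gap (p z * A y) (q z * B y)) summable_on (S \<times> UNIV)"
    by (rule summable_on_dominated[OF bnd]) (auto intro!: abs_xlog_gap_le mult_nonneg_nonneg A0 B0 p0 q0)
  have sEE: "(\<lambda>z. xlog_gap (p z) (q z)) summable_on S"
    by (rule summable_on_dominated[OF pqs]) (auto intro!: abs_xlog_gap_le p0 q0)
  have smin: "(\<lambda>z. min (p z) (q z)) summable_on S"
    by (rule summable_on_dominated[OF ps]) (use p0 q0 in auto)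
  have "(\<Sum>\<^sub>\<infinity>z\<in>S. xlog_gap (p z) (q z)) + 2 * pair_cap A B * (\<Sum>\<^sub>\<infinity>z\<in>S. min (p z) (q z))
      = (\<Sum>\<^sub>\<infinity>z\<in>S. xlog_gap (p z) (q z) + 2 * pair_cap A B * min (p z) (q z))"
    using sEE smin by (simp add: infsum_add summable_on_cmult_right infsum_cmult_right')
  also have "\<dots> \<le> (\<Sum>\<^sub>\<infinity>z\<in>S. \<Sum>\<^sub>\<infinity>y. xlog_gap (p z * A y) (q z * B y))"
    using xlog_gap_refine_ge(2)[OF ch p0 q0]
    by (intro infsum_mono summable_on_Sigma_banach[OF sm, simplified] summable_on_add sEE
        summable_on_cmult_right smin) (simp add: mult.commute mult.left_commute)
  also have "\<dots> = (\<Sum>\<^sub>\<infinity>(z,y)\<in>S \<times> UNIV. xlog_gap (p z * A y) (q z * B y))"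
    using infsum_Sigma'_banach[OF sm] by simp
  finally show ?thesis .
qed

section \<open>Product channels\<close>

text \<open>The sum of \<open>xlog_gap\<close> over the outputs of the memoryless channel \<open>C\<close> used on the coordinates \<open>K\<close>,
  for the two input words \<open>c0\<close> and \<open>c1\<close>.\<close>
definition prod_gap :: "(bool \<Rightarrow> 'b \<Rightarrow> real) \<Rightarrow> (nat \<Rightarrow> bool) \<Rightarrow> (nat \<Rightarrow> bool) \<Rightarrow> nat set \<Rightarrow> real" where
  "prod_gap C c0 c1 K = (\<Sum>\<^sub>\<infinity>h\<in>PiE K (\<lambda>_. UNIV). xlog_gap (\<Prod>j\<in>K. C (c0 j) (h j)) (\<Prod>j\<in>K. C (c1 j) (h j)))"

lemma has_sum_prod_rows:
  assumes "prob_pair (C False) (C True)" "finite K"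
  shows "((\<lambda>h. \<Prod>j\<in>K. C (c j) (h j)) has_sum 1) (PiE K (\<lambda>_. UNIV))"
  using has_sum_prod_PiE_nonneg[of K "\<lambda>j. C (c j)" "\<lambda>_. 1"] assms prob_pair_rows[OF assms(1), of "c _" "c _"]
  unfolding prob_pair_def by auto

lemma prod_gap_insert_ge:
  fixes C :: "bool \<Rightarrow> 'b \<Rightarrow> real"
  assumes ch: "prob_pair (C False) (C True)" and K: "finite K" "k \<notin> K"
  shows "prod_gap C c0 c1 (insert k K) \<ge> prod_gap C c0 c1 K + 2 * pair_cap (C (c0 k)) (C (c1 k))
     * (\<Sum>\<^sub>\<infinity>h\<in>PiE K (\<lambda>_. UNIV). min (\<Prod>j\<in>K. C (c0 j) (h j)) (\<Prod>j\<in>K. C (c1 j) (h j)))"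
proof -
  define p where "p h = (\<Prod>j\<in>K. C (c0 j) (h j))" for h :: "nat \<Rightarrow> 'b"
  define q where "q h = (\<Prod>j\<in>K. C (c1 j) (h j))" for h :: "nat \<Rightarrow> 'b"
  note comb = PiE_insert_as_image[OF K(2), where 'b='b]
  have C0: "C a y \<ge> 0" for a y using ch prob_pair_rows[OF ch, of a a] unfolding prob_pair_def by auto
  have pr: "(\<Prod>j\<in>insert k K. C (c j) ((h(k:=y)) j)) = C (c k) y * (\<Prod>j\<in>K. C (c j) (h j))" for c h y
  proof -
    have "(\<Prod>j\<in>K. C (c j) ((h(k:=y)) j)) = (\<Prod>j\<in>K. C (c j) (h j))"
      using K by (intro prod.cong) auto
    thus ?thesis using K by simp
  qed
  have "prod_gap C c0 c1 (insert k K) = (\<Sum>\<^sub>\<infinity>(h,y)\<in>PiE K (\<lambda>_. UNIV) \<times> UNIV.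
        xlog_gap (\<Prod>j\<in>insert k K. C (c0 j) ((h(k:=y)) j)) (\<Prod>j\<in>insert k K. C (c1 j) ((h(k:=y)) j)))"
    unfolding prod_gap_def comb(1) by (subst infsum_reindex[OF comb(2)]) (simp add: o_def case_prod_unfold)
  also have "\<dots> = (\<Sum>\<^sub>\<infinity>(h,y)\<in>PiE K (\<lambda>_. UNIV) \<times> UNIV. xlog_gap (p h * C (c0 k) y) (q h * C (c1 k) y))"
    unfolding pr p_def q_def by (simp add: mult.commute)
  also have "\<dots> \<ge> (\<Sum>\<^sub>\<infinity>h\<in>PiE K (\<lambda>_. UNIV). xlog_gap (p h) (q h)) + 2 * pair_cap (C (c0 k)) (C (c1 k))
       * (\<Sum>\<^sub>\<infinity>h\<in>PiE K (\<lambda>_. UNIV). min (p h) (q h))"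
  proof (rule infsum_xlog_gap_refine_ge)
    show "prob_pair (C (c0 k)) (C (c1 k))" using prob_pair_rows[OF ch] .
    show "p summable_on PiE K (\<lambda>_. UNIV)" unfolding p_def
      using has_sum_prod_rows[OF ch K(1)] has_sum_imp_summable by blast
    show "q summable_on PiE K (\<lambda>_. UNIV)" unfolding q_def
      using has_sum_prod_rows[OF ch K(1)] has_sum_imp_summable by blast
  qed (auto simp: p_def q_def intro!: prod_nonneg C0)
  finally show ?thesis unfolding prod_gap_def p_def q_def .
qed

lemma prod_gap_empty: "prod_gap C c0 c1 {} = -2"
  by (simp add: prod_gap_def xlog_gap_self)

lemma prod_gap_insert_mono:
  assumes ch: "prob_pair (C False) (C True)" and K: "finite K"
  shows "prod_gap C c0 c1 K \<le> prod_gap C c0 c1 (insert k K)"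
proof (cases "k \<in> K")
  case False
  have "pair_cap (C (c0 k)) (C (c1 k)) \<ge> 0"
    by (rule pair_cap_nonneg[OF prob_pair_rows[OF ch]])
  moreover have "(\<Sum>\<^sub>\<infinity>h\<in>PiE K (\<lambda>_. UNIV). min (\<Prod>j\<in>K. C (c0 j) (h j)) (\<Prod>j\<in>K. C (c1 j) (h j))) \<ge> 0"
    using prob_pair_rows[OF ch] unfolding prob_pair_def by (intro infsum_nonneg) (auto intro!: prod_nonneg)
  ultimately show ?thesis
    using prod_gap_insert_ge[OF ch K False, of c0 c1] by (smt (verit) mult_nonneg_nonneg)
qed (simp add: insert_absorb)

lemma prod_gap_mono:
  assumes ch: "prob_pair (C False) (C True)" and "finite K2" "K1 \<subseteq> K2"
  shows "prod_gap C c0 c1 K1 \<le> prod_gap C c0 c1 K2"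
proof -
  have "prod_gap C c0 c1 K1 \<le> prod_gap C c0 c1 (K1 \<union> D)" if "finite D" for D
    using that
  proof (induction D rule: finite_induct)
    case (insert x F)
    have "finite (K1 \<union> F)" using assms insert.hyps(1) by (auto intro: finite_subset)
    thus ?case using insert.IH prod_gap_insert_mono[OF ch, of "K1 \<union> F" c0 c1 x] by simp
  qed simp
  moreover have "K2 = K1 \<union> (K2 - K1)" using assms by auto
  ultimately show ?thesis using assms(2) by (metis finite_Diff)
qed

lemma prod_gap_singleton_ge:
  assumes ch: "prob_pair (C False) (C True)" and "c0 k \<noteq> c1 k"
  shows "prod_gap C c0 c1 {k} \<ge> -2 + 2 * pair_cap (C False) (C True)"
  using prod_gap_insert_ge[OF ch, of "{}" k c0 c1] prod_gap_empty[of C c0 c1] pair_cap_rows[OF ch assms(2)] by simp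

lemma bij_betw_PiE_singleton: "bij_betw (\<lambda>h. h i) (PiE {i} (\<lambda>_. UNIV)) UNIV"
proof (rule bij_betwI[where g="\<lambda>y. (\<lambda>j. if j = i then y else undefined)"])
  show "(\<lambda>h. h i) \<in> PiE {i} (\<lambda>_. UNIV) \<rightarrow> UNIV" by auto
  show "(\<lambda>y. \<lambda>j. if j = i then y else undefined) \<in> UNIV \<rightarrow> PiE {i} (\<lambda>_. UNIV)"
    by (auto simp: PiE_def extensional_def)
  show "(\<lambda>j. if j = i then x i else undefined) = x" if "x \<in> PiE {i} (\<lambda>_. UNIV)" for x
    using that by (auto simp: fun_eq_iff PiE_def extensional_def)
  show "(\<lambda>j. if j = i then y else undefined) i = y" for y by simp
qed

lemma prod_gap_doubleton_ge:
  assumes ch: "prob_pair (C False) (C True)" and "c0 i \<noteq> c1 i" "c0 k \<noteq> c1 k" "i \<noteq> k"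
  shows "prod_gap C c0 c1 {i, k} \<ge> -2 + 2 * pair_cap (C False) (C True)
      + 2 * pair_cap (C False) (C True) * (\<Sum>\<^sub>\<infinity>y. min (C False y) (C True y))"
proof -
  have "prod_gap C c0 c1 (insert k {i}) \<ge> prod_gap C c0 c1 {i} + 2 * pair_cap (C (c0 k)) (C (c1 k))
     * (\<Sum>\<^sub>\<infinity>h\<in>PiE {i} (\<lambda>_. UNIV). min (\<Prod>j\<in>{i}. C (c0 j) (h j)) (\<Prod>j\<in>{i}. C (c1 j) (h j)))"
    using assms by (intro prod_gap_insert_ge) auto
  moreover have "(\<Sum>\<^sub>\<infinity>h\<in>PiE {i} (\<lambda>_. UNIV). min (\<Prod>j\<in>{i}. C (c0 j) (h j)) (\<Prod>j\<in>{i}. C (c1 j) (h j)))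
      = (\<Sum>\<^sub>\<infinity>y. min (C (c0 i) y) (C (c1 i) y))"
    using infsum_reindex_bij_betw[OF bij_betw_PiE_singleton[of i], of "\<lambda>y. min (C (c0 i) y) (C (c1 i) y)"] by simp
  moreover have "(\<Sum>\<^sub>\<infinity>y. min (C (c0 i) y) (C (c1 i) y)) = (\<Sum>\<^sub>\<infinity>y. min (C False y) (C True y))"
    using assms(2) by (cases "c0 i") (auto simp: min.commute)
  moreover have "insert k {i} = {i, k}" by auto
  moreover have "prod_gap C c0 c1 {i} \<ge> -2 + 2 * pair_cap (C False) (C True)" using prod_gap_singleton_ge[of C c0 i c1] ch assms(2) by blast
  ultimately show ?thesis using pair_cap_rows[OF ch assms(3)] by simp
qed

section \<open>Binary words\<close>

abbreviation bitvecs :: "nat \<Rightarrow> bool list set" where "bitvecs n \<equiv> {u. length u = n}"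

lemma finite_bitvecs[simp]: "finite (bitvecs n)"
  using finite_lists_length_eq[of "UNIV :: bool set" n] by simp

lemma card_bitvecs: "card (bitvecs n) = 2 ^ n"
  using card_lists_length_eq[of "UNIV :: bool set" n] by simp

lemma sum_bitvecs_Suc_Cons: "(\<Sum>u\<in>bitvecs (Suc n). f u) = (\<Sum>u\<in>bitvecs n. f (False # u) + f (True # u))"
proof -
  have e: "bitvecs (Suc n) = (\<lambda>(u,b). b # u) ` (bitvecs n \<times> UNIV)"
    using lists_length_Suc_eq[of "UNIV :: bool set" n] by simp
  have i: "inj_on (\<lambda>(u,b). b # u) (bitvecs n \<times> (UNIV :: bool set))" by (auto simp: inj_on_def)
  have "(\<Sum>u\<in>bitvecs (Suc n). f u) = (\<Sum>(u,b)\<in>bitvecs n \<times> UNIV. f (b # u))"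
    unfolding e by (subst sum.reindex[OF i]) (simp add: case_prod_unfold)
  also have "\<dots> = (\<Sum>u\<in>bitvecs n. \<Sum>b\<in>UNIV. f (b # u))" by (rule sum.cartesian_product[symmetric])
  also have "\<dots> = (\<Sum>u\<in>bitvecs n. f (False # u) + f (True # u))" by (simp add: UNIV_bool add.commute)
  finally show ?thesis .
qed

lemma sum_bitvecs_Suc_snoc: "(\<Sum>u\<in>bitvecs (Suc n). f u) = (\<Sum>u\<in>bitvecs n. f (u @ [False]) + f (u @ [True]))"
proof -
  have e: "bitvecs (Suc n) = (\<lambda>(u,b). u @ [b]) ` (bitvecs n \<times> UNIV)"
  proof
    show "bitvecs (Suc n) \<subseteq> (\<lambda>(u,b). u @ [b]) ` (bitvecs n \<times> UNIV)"
    proof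
      fix x assume "x \<in> bitvecs (Suc n)"
      hence "x = butlast x @ [last x]" "butlast x \<in> bitvecs n"
        by (auto intro!: append_butlast_last_id[symmetric])
      thus "x \<in> (\<lambda>(u,b). u @ [b]) ` (bitvecs n \<times> UNIV)" by (metis (no_types, lifting) SigmaI UNIV_I case_prod_conv image_eqI)
    qed
  qed auto
  have i: "inj_on (\<lambda>(u,b). u @ [b]) (bitvecs n \<times> (UNIV :: bool set))" by (auto simp: inj_on_def)
  have "(\<Sum>u\<in>bitvecs (Suc n). f u) = (\<Sum>(u,b)\<in>bitvecs n \<times> UNIV. f (u @ [b]))"
    unfolding e by (subst sum.reindex[OF i]) (simp add: case_prod_unfold)
  also have "\<dots> = (\<Sum>u\<in>bitvecs n. \<Sum>b\<in>UNIV. f (u @ [b]))" by (rule sum.cartesian_product[symmetric])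
  also have "\<dots> = (\<Sum>u\<in>bitvecs n. f (u @ [False]) + f (u @ [True]))" by (simp add: UNIV_bool add.commute)
  finally show ?thesis .
qed

definition completions_sum :: "(bool list \<Rightarrow> real) \<Rightarrow> nat \<Rightarrow> bool list \<Rightarrow> real" where
  "completions_sum w n pre = (\<Sum>v\<in>bitvecs (n - length pre). w (pre @ v))"

lemma completions_sum_snoc:
  assumes "length pre < n"
  shows "completions_sum w n pre = completions_sum w n (pre @ [False]) + completions_sum w n (pre @ [True])"
proof -
  obtain m where m: "n - length pre = Suc m" using assms by (metis Suc_diff_Suc)
  hence m2: "n - length (pre @ [b]) = m" for b by simp
  show ?thesis unfolding completions_sum_def m m2 by (simp add: sum_bitvecs_Suc_Cons sum.distrib)
qed

lemma completions_sum_full: "length u = n \<Longrightarrow> completions_sum w n u = w u"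
  by (simp add: completions_sum_def)

lemma telescope_xlog_gap_completions:
  "(\<Sum>i<n. \<Sum>us\<in>bitvecs i. xlog_gap (completions_sum w n (us @ [False])) (completions_sum w n (us @ [True])))
     = (\<Sum>u\<in>bitvecs n. xlog (w u)) - xlog (completions_sum w n [])"
proof -
  define \<Phi> where "\<Phi> i = (\<Sum>us\<in>bitvecs i. xlog (completions_sum w n us))" for i
  have step: "(\<Sum>us\<in>bitvecs i. xlog_gap (completions_sum w n (us @ [False])) (completions_sum w n (us @ [True]))) = \<Phi> (Suc i) - \<Phi> i"
    if "i < n" for i
  proof -
    have "\<Phi> (Suc i) = (\<Sum>us\<in>bitvecs i. xlog (completions_sum w n (us @ [False])) + xlog (completions_sum w n (us @ [True])))"
      unfolding \<Phi>_def by (rule sum_bitvecs_Suc_snoc)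
    moreover have "\<Phi> i = (\<Sum>us\<in>bitvecs i. xlog (completions_sum w n (us @ [False]) + completions_sum w n (us @ [True])))"
      unfolding \<Phi>_def using that by (intro sum.cong) (auto simp: completions_sum_snoc[symmetric])
    ultimately show ?thesis by (simp add: xlog_gap_def sum_subtractf)
  qed
  have "(\<Sum>i<n. \<Sum>us\<in>bitvecs i. xlog_gap (completions_sum w n (us @ [False])) (completions_sum w n (us @ [True]))) = (\<Sum>i<n. \<Phi> (Suc i) - \<Phi> i)"
    by (intro sum.cong) (auto simp: step)
  also have "\<dots> = \<Phi> n - \<Phi> 0" by (rule sum_lessThan_telescope)
  also have "\<Phi> n = (\<Sum>u\<in>bitvecs n. xlog (w u))" unfolding \<Phi>_def by (intro sum.cong) (auto simp: completions_sum_full)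
  also have "\<Phi> 0 = xlog (completions_sum w n [])" by (simp add: \<Phi>_def)
  finally show ?thesis .
qed

lemma sum_bitvecs_prod:
  fixes f :: "nat \<Rightarrow> bool \<Rightarrow> real"
  shows "(\<Sum>x\<in>bitvecs n. \<Prod>j<n. f j (x ! j)) = (\<Prod>j<n. f j False + f j True)"
proof -
  have "(\<Sum>x\<in>bitvecs n. \<Prod>j<n. f j (x ! j)) = (\<Sum>h\<in>PiE {..<n} (\<lambda>_. UNIV). \<Prod>j<n. f j (h j))"
  proof (rule sum.reindex_bij_witness[where i="\<lambda>h. map h [0..<n]" and j="\<lambda>x. restrict (\<lambda>j. x ! j) {..<n}"])
    show "map (restrict ((!) a) {..<n}) [0..<n] = a" if "a \<in> bitvecs n" for a
      using that by (auto intro: nth_equalityI)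
    show "restrict ((!) (map b [0..<n])) {..<n} = b" if "b \<in> PiE {..<n} (\<lambda>_. UNIV)" for b
      using that by (auto simp: fun_eq_iff PiE_def extensional_def)
  qed (auto intro!: prod.cong)
  also have "\<dots> = (\<Prod>j<n. \<Sum>b\<in>UNIV. f j b)" by (rule prod_sum_PiE[symmetric]) auto
  also have "\<dots> = (\<Prod>j<n. f j False + f j True)" by (simp add: UNIV_bool add.commute)
  finally show ?thesis .
qed

lemma prod_if_eq:
  fixes n k :: nat and b :: "'a::comm_monoid_mult"
  assumes "k < n"
  shows "(\<Prod>j<n. (if j = k then b else c j)) = b * (\<Prod>j\<in>{..<n} - {k}. c j)"
proof -
  have "(\<Prod>j<n. (if j = k then b else c j)) = (if k = k then b else c k) * (\<Prod>j\<in>{..<n} - {k}. (if j = k then b else c j))"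
    by (rule prod.remove) (use assms in auto)
  also have "(\<Prod>j\<in>{..<n} - {k}. (if j = k then b else c j)) = (\<Prod>j\<in>{..<n} - {k}. c j)"
    by (intro prod.cong) auto
  finally show ?thesis by simp
qed

lemma xlog_gap_product_expansion:
  assumes a0: "\<And>j b. a j b \<ge> 0"
  shows "(\<Sum>x\<in>bitvecs n. xlog (\<Prod>j<n. a j (x ! j))) - xlog (\<Prod>j<n. a j False + a j True)
    = (\<Sum>k<n. \<Prod>j<n. (if j = k then xlog_gap (a k False) (a k True) else a j False + a j True))"
proof -
  define M where "M j = a j False + a j True" for j
  have M0: "M j \<ge> 0" for j using a0 by (simp add: M_def add_nonneg_nonneg)
  have "(\<Sum>x\<in>bitvecs n. xlog (\<Prod>j<n. a j (x ! j)))
      = (\<Sum>x\<in>bitvecs n. \<Sum>k<n. (\<Prod>j\<in>{..<n} - {k}. a j (x ! j)) * xlog (a k (x ! k)))"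
    by (intro sum.cong refl xlog_prod) (auto intro: a0)
  also have "\<dots> = (\<Sum>k<n. \<Sum>x\<in>bitvecs n. \<Prod>j<n. (if j = k then xlog (a k (x ! k)) else a j (x ! j)))"
    by (subst sum.swap) (auto intro!: sum.cong simp: prod_if_eq mult.commute)
  also have "\<dots> = (\<Sum>k<n. \<Prod>j<n. (if j = k then xlog (a k False) + xlog (a k True) else M j))"
  proof (intro sum.cong refl)
    fix k
    have "(\<Sum>x\<in>bitvecs n. \<Prod>j<n. (if j = k then xlog (a k (x ! k)) else a j (x ! j)))
        = (\<Sum>x\<in>bitvecs n. \<Prod>j<n. (\<lambda>j b. if j = k then xlog (a k b) else a j b) j (x ! j))"
      by (intro sum.cong prod.cong) auto
    also have "\<dots> = (\<Prod>j<n. (if j = k then xlog (a k False) else a j False) + (if j = k then xlog (a k True) else a j True))"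
      by (rule sum_bitvecs_prod)
    also have "\<dots> = (\<Prod>j<n. (if j = k then xlog (a k False) + xlog (a k True) else M j))"
      by (intro prod.cong) (auto simp: M_def)
    finally show "(\<Sum>x\<in>bitvecs n. \<Prod>j<n. (if j = k then xlog (a k (x ! k)) else a j (x ! j)))
        = (\<Prod>j<n. (if j = k then xlog (a k False) + xlog (a k True) else M j))" .
  qed
  also have "\<dots> = (\<Sum>k<n. (xlog (a k False) + xlog (a k True)) * (\<Prod>j\<in>{..<n} - {k}. M j))"
    by (intro sum.cong refl) (simp add: prod_if_eq)
  finally have A: "(\<Sum>x\<in>bitvecs n. xlog (\<Prod>j<n. a j (x ! j))) = (\<Sum>k<n. (xlog (a k False) + xlog (a k True)) * (\<Prod>j\<in>{..<n} - {k}. M j))" .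
  have B: "xlog (\<Prod>j<n. M j) = (\<Sum>k<n. (\<Prod>j\<in>{..<n} - {k}. M j) * xlog (M k))"
    by (rule xlog_prod) (auto intro: M0)
  have C: "(\<Sum>k<n. \<Prod>j<n. (if j = k then xlog_gap (a k False) (a k True) else M j))
       = (\<Sum>k<n. xlog_gap (a k False) (a k True) * (\<Prod>j\<in>{..<n} - {k}. M j))"
    by (intro sum.cong refl) (simp add: prod_if_eq)
  show ?thesis unfolding M_def[symmetric] A B C
    by (simp add: xlog_gap_def M_def sum_subtractf[symmetric] algebra_simps)
qed

section \<open>Synthetic channels\<close>

lemma has_sum_Node_iff:
  fixes F :: "'y out \<Rightarrow> 'a::topological_comm_monoid_add"
  assumes "\<And>z. z \<notin> (\<lambda>(ys,us). Node ys us) ` (Y \<times> U) \<Longrightarrow> F z = 0"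
  shows "(F has_sum s) UNIV \<longleftrightarrow> ((\<lambda>(ys,us). F (Node ys us)) has_sum s) (Y \<times> U)"
proof -
  have i: "inj_on (\<lambda>(ys,us). Node ys us) (Y \<times> U)" by (auto simp: inj_on_def)
  have "(F has_sum s) UNIV \<longleftrightarrow> (F has_sum s) ((\<lambda>(ys,us). Node ys us) ` (Y \<times> U))"
    by (rule has_sum_cong_neutral) (use assms in auto)
  also have "\<dots> \<longleftrightarrow> ((F \<circ> (\<lambda>(ys,us). Node ys us)) has_sum s) (Y \<times> U)"
    by (rule has_sum_reindex[OF i])
  finally show ?thesis by (simp add: o_def case_prod_unfold)
qed

definition kernel_lik :: "(bool \<Rightarrow> 'o \<Rightarrow> real) \<Rightarrow> (bool list \<Rightarrow> bool list) \<Rightarrow> nat \<Rightarrow> 'o list \<Rightarrow> bool list \<Rightarrow> real" where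
  "kernel_lik C g l ys u = (\<Prod>j<l. C (g u ! j) (ys ! j))"

lemma synth_Node:
  "synth l g i C ui (Node ys us) = (if length ys = l \<and> length us = i
      then (1 / 2 ^ (l - 1)) * completions_sum (kernel_lik C g l ys) l (us @ [ui]) else 0)"
proof (cases "length ys = l \<and> length us = i")
  case True
  hence e: "l - length (us @ [ui]) = l - i - 1" by simp
  show ?thesis using True unfolding synth_def completions_sum_def kernel_lik_def e by simp
qed (auto simp: synth_def)

lemma synth_outside_Node:
  "z \<notin> (\<lambda>(ys,us). Node ys us) ` ({ys. length ys = l} \<times> bitvecs i) \<Longrightarrow> synth l g i C ui z = 0"
  by (cases z) (auto simp: synth_def)

lemma kernel_lik_nonneg: "is_channel C \<Longrightarrow> kernel_lik C g l ys u \<ge> 0"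
  unfolding kernel_lik_def is_channel_def by (auto intro: prod_nonneg)

lemma completions_sum_nonneg: "is_channel C \<Longrightarrow> completions_sum (kernel_lik C g l ys) l pre \<ge> 0"
  unfolding completions_sum_def by (auto intro!: sum_nonneg kernel_lik_nonneg)

lemma has_sum_kernel_lik:
  assumes "is_channel C"
  shows "((\<lambda>ys. kernel_lik C g l ys u) has_sum 1) {ys. length ys = l}"
  using has_sum_lists_prod_nonneg[of l "\<lambda>j. C (g u ! j)" "\<lambda>_. 1"] assms
  unfolding kernel_lik_def is_channel_def by auto

lemma has_sum_completions_sum:
  assumes "is_channel C"
  shows "((\<lambda>ys. completions_sum (kernel_lik C g l ys) l pre) has_sum 2 ^ (l - length pre)) {ys. length ys = l}"
proof -
  have "((\<lambda>ys. \<Sum>v\<in>bitvecs (l - length pre). kernel_lik C g l ys (pre @ v)) has_sum (\<Sum>v\<in>bitvecs (l - length pre). 1)) {ys. length ys = l}"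
    by (intro has_sum_finite_sum has_sum_kernel_lik assms) auto
  thus ?thesis by (simp add: completions_sum_def card_bitvecs)
qed

lemma synth_nonneg:
  assumes ch: "is_channel C" shows "synth l g i C x z \<ge> 0"
proof (cases z)
  case (Base y) thus ?thesis by (simp add: synth_def)
next
  case (Node ys us) thus ?thesis
    using completions_sum_nonneg[OF ch] by (auto simp: synth_Node)
qed

lemma is_channel_synth:
  assumes ch: "is_channel C" and i: "i < l"
  shows "is_channel (synth l g i C)"
  unfolding is_channel_def
proof (intro conjI allI)
  fix x z show "0 \<le> synth l g i C x z" by (rule synth_nonneg[OF ch])
next
  fix x
  define c :: real where "c = 1 / 2 ^ (l - 1)"
  have "((\<lambda>(ys,us). c * completions_sum (kernel_lik C g l ys) l (us @ [x])) has_sum (\<Sum>us\<in>bitvecs i. c * 2 ^ (l - Suc i)))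
     ({ys. length ys = l} \<times> bitvecs i)"
  proof (rule has_sum_Times_finite)
    fix us assume "us \<in> bitvecs i"
    thus "((\<lambda>ys. c * completions_sum (kernel_lik C g l ys) l (us @ [x])) has_sum c * 2 ^ (l - Suc i)) {ys. length ys = l}"
      using has_sum_completions_sum[OF ch, of g l "us @ [x]"] by (intro has_sum_cmult_right) simp
  qed simp
  moreover have "(\<Sum>us\<in>bitvecs i. c * 2 ^ (l - Suc i)) = 1"
  proof -
    have "(2::real) ^ i * 2 ^ (l - Suc i) = 2 ^ (l - 1)"
      using i by (simp add: power_add[symmetric])
    thus ?thesis by (simp add: c_def card_bitvecs)
  qed
  ultimately have H: "((\<lambda>(ys,us). c * completions_sum (kernel_lik C g l ys) l (us @ [x])) has_sum 1) ({ys. length ys = l} \<times> bitvecs i)"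
    by metis
  have "((\<lambda>(ys,us). synth l g i C x (Node ys us)) has_sum 1) ({ys. length ys = l} \<times> bitvecs i)"
    using H by (rule has_sum_cong[THEN iffD2, rotated]) (auto simp: synth_Node c_def)
  thus "(synth l g i C x has_sum 1) UNIV"
    by (subst has_sum_Node_iff) (auto intro: synth_outside_Node)
qed

definition branch_gap :: "(bool \<Rightarrow> 'o \<Rightarrow> real) \<Rightarrow> (bool list \<Rightarrow> bool list) \<Rightarrow> nat \<Rightarrow> 'o list \<Rightarrow> bool list \<Rightarrow> real" where
  "branch_gap C g l ys us =
    xlog_gap (completions_sum (kernel_lik C g l ys) l (us @ [False])) (completions_sum (kernel_lik C g l ys) l (us @ [True]))"

definition synth_gap :: "(bool \<Rightarrow> 'o \<Rightarrow> real) \<Rightarrow> (bool list \<Rightarrow> bool list) \<Rightarrow> nat \<Rightarrow> bool list \<Rightarrow> real" where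
  "synth_gap C g l us = (\<Sum>\<^sub>\<infinity>ys\<in>{ys. length ys = l}. branch_gap C g l ys us)"

lemma branch_gap_summable:
  assumes ch: "is_channel C"
  shows "(\<lambda>ys. branch_gap C g l ys us) summable_on {ys. length ys = l}"
  unfolding branch_gap_def
proof (rule summable_on_dominated)
  show "(\<lambda>ys. completions_sum (kernel_lik C g l ys) l (us @ [False]) + completions_sum (kernel_lik C g l ys) l (us @ [True])) summable_on {ys. length ys = l}"
    using has_sum_add[OF has_sum_completions_sum[OF ch] has_sum_completions_sum[OF ch]] by (rule has_sum_imp_summable)
qed (intro abs_xlog_gap_le completions_sum_nonneg ch)

lemma has_sum_xlog_gap_synth:
  fixes C :: "bool \<Rightarrow> 'y out \<Rightarrow> real"
  assumes ch: "is_channel C" and i: "i < l"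
  shows "((\<lambda>z. xlog_gap (synth l g i C False z) (synth l g i C True z)) has_sum
           ((1 / 2 ^ (l - 1)) * (\<Sum>us\<in>bitvecs i. synth_gap C g l us))) UNIV"
proof -
  define c :: real where "c = 1 / 2 ^ (l - 1)"
  have c0: "c \<ge> 0" by (simp add: c_def)
  have "((\<lambda>(ys,us). c * branch_gap C g l ys us)
       has_sum (\<Sum>us\<in>bitvecs i. c * synth_gap C g l us)) ({ys. length ys = l} \<times> bitvecs i)"
  proof (rule has_sum_Times_finite)
    fix us assume "us \<in> bitvecs i"
    show "((\<lambda>ys. c * branch_gap C g l ys us)
       has_sum c * synth_gap C g l us) {ys. length ys = l}"
      unfolding synth_gap_def by (intro has_sum_cmult_right has_sum_infsum branch_gap_summable ch)
  qed simp
  hence H: "((\<lambda>(ys,us). c * branch_gap C g l ys us)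
       has_sum (c * (\<Sum>us\<in>bitvecs i. synth_gap C g l us))) ({ys. length ys = l} \<times> bitvecs i)"
    by (simp add: sum_distrib_left)
  have "((\<lambda>(ys,us). xlog_gap (synth l g i C False (Node ys us)) (synth l g i C True (Node ys us)))
       has_sum (c * (\<Sum>us\<in>bitvecs i. synth_gap C g l us))) ({ys. length ys = l} \<times> bitvecs i)"
  proof (rule has_sum_cong[THEN iffD2, OF _ H])
    fix x :: "'y out list \<times> bool list" assume x: "x \<in> {ys. length ys = l} \<times> bitvecs i"
    obtain ys :: "'y out list" and us where xe: "x = (ys, us)" by fastforce
    have sy: "synth l g i C b (Node ys us) = c * completions_sum (kernel_lik C g l ys) l (us @ [b])" for b
      using x xe by (simp add: synth_Node c_def)
    show "(\<lambda>(ys,us). xlog_gap (synth l g i C False (Node ys us)) (synth l g i C True (Node ys us))) x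
        = (\<lambda>(ys,us). c * branch_gap C g l ys us) x"
      unfolding xe branch_gap_def using sy xlog_gap_cmult[OF c0 completions_sum_nonneg[OF ch] completions_sum_nonneg[OF ch]] by simp
  qed
  thus ?thesis unfolding c_def
    by (subst has_sum_Node_iff) (auto simp: synth_outside_Node)
qed

lemma sym_cap_synth:
  fixes C :: "bool \<Rightarrow> 'y out \<Rightarrow> real"
  assumes ch: "is_channel C" and i: "i < l"
  shows "sym_cap (synth l g i C) = 1 + (1 / 2 ^ (l - 1)) * (\<Sum>us\<in>bitvecs i. synth_gap C g l us) / 2"
proof -
  have chp: "prob_pair (synth l g i C False) (synth l g i C True)"
    using is_channel_synth[OF ch i] is_channel_iff_prob_pair by blast
  have "sym_cap (synth l g i C) = pair_cap (synth l g i C False) (synth l g i C True)"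
    by (rule sym_cap_eq_pair_cap) (rule synth_nonneg[OF ch])
  moreover have "2 * pair_cap (synth l g i C False) (synth l g i C True) - 2 = (1 / 2 ^ (l - 1)) * (\<Sum>us\<in>bitvecs i. synth_gap C g l us)"
    using has_sum_unique[OF has_sum_xlog_gap_pair_cap[OF chp] has_sum_xlog_gap_synth[OF ch i]] .
  ultimately show ?thesis by simp
qed

lemma telescope_kernel_lik:
  assumes ch: "is_channel C" and ker: "is_kernel l g" and ys: "length ys = l"
  shows "(\<Sum>i<l. \<Sum>us\<in>bitvecs i. branch_gap C g l ys us)
    = (\<Sum>k<l. \<Prod>j<l. (if j = k then xlog_gap (C False (ys ! k)) (C True (ys ! k)) else C False (ys ! j) + C True (ys ! j)))"
proof -
  define H where "H x = (\<Prod>j<l. C (x ! j) (ys ! j))" for x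
  have bij: "bij_betw g (bitvecs l) (bitvecs l)" using ker by (simp add: is_kernel_def)
  have w: "kernel_lik C g l ys u = H (g u)" for u by (simp add: kernel_lik_def H_def)
  have s1: "(\<Sum>u\<in>bitvecs l. xlog (kernel_lik C g l ys u)) = (\<Sum>x\<in>bitvecs l. xlog (\<Prod>j<l. C (x ! j) (ys ! j)))"
    unfolding w using sum.reindex_bij_betw[OF bij, of "\<lambda>x. xlog (H x)"] by (simp add: H_def)
  have s2: "completions_sum (kernel_lik C g l ys) l [] = (\<Prod>j<l. C False (ys ! j) + C True (ys ! j))"
  proof -
    have "completions_sum (kernel_lik C g l ys) l [] = (\<Sum>u\<in>bitvecs l. H (g u))" by (simp add: completions_sum_def w)
    also have "\<dots> = (\<Sum>x\<in>bitvecs l. H x)" by (rule sum.reindex_bij_betw[OF bij])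
    also have "\<dots> = (\<Prod>j<l. C False (ys ! j) + C True (ys ! j))"
      unfolding H_def by (rule sum_bitvecs_prod[of "\<lambda>j b. C b (ys ! j)" l])
    finally show ?thesis .
  qed
  have "(\<Sum>i<l. \<Sum>us\<in>bitvecs i. branch_gap C g l ys us)
      = (\<Sum>u\<in>bitvecs l. xlog (kernel_lik C g l ys u)) - xlog (completions_sum (kernel_lik C g l ys) l [])"
    unfolding branch_gap_def by (rule telescope_xlog_gap_completions)
  also have "\<dots> = (\<Sum>x\<in>bitvecs l. xlog (\<Prod>j<l. C (x ! j) (ys ! j))) - xlog (\<Prod>j<l. C False (ys ! j) + C True (ys ! j))"
    unfolding s1 s2 ..
  also have "\<dots> = (\<Sum>k<l. \<Prod>j<l. (if j = k then xlog_gap (C False (ys ! k)) (C True (ys ! k)) else C False (ys ! j) + C True (ys ! j)))"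
    using xlog_gap_product_expansion[of "\<lambda>j b. C b (ys ! j)" l] ch unfolding is_channel_def by simp
  finally show ?thesis .
qed

lemma has_sum_lists_prod_xlog_gap_at:
  fixes C :: "bool \<Rightarrow> 'o \<Rightarrow> real"
  assumes ch: "is_channel C" and k: "k < l"
  shows "((\<lambda>ys. \<Prod>j<l. (if j = k then xlog_gap (C False (ys ! j)) (C True (ys ! j))
            else C False (ys ! j) + C True (ys ! j)))
      has_sum ((2 * pair_cap (C False) (C True) - 2) * 2 ^ (l - 1))) {ys. length ys = l}"
proof -
  define f where "f j y = (if j = k then xlog_gap (C False y) (C True y) else C False y + C True y)" for j y
  have chp: "prob_pair (C False) (C True)" using ch is_channel_iff_prob_pair by blast
  have C0: "C b y \<ge> 0" for b y using ch unfolding is_channel_def by auto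
  have CS: "((\<lambda>y. 1 * C False y + 1 * C True y) has_sum 2) UNIV"
    using has_sum_add_pair[OF chp, of 1 1] by simp
  have "(f j) summable_on UNIV" for j
    by (rule summable_on_dominated[where g="\<lambda>y. 1 * C False y + 1 * C True y"])
       (use CS C0 in \<open>auto simp: f_def summable_on_def intro!: abs_xlog_gap_le add_nonneg_nonneg\<close>)
  hence "(\<lambda>y. \<bar>f j y\<bar>) summable_on UNIV" for j
    using summable_on_iff_abs_summable_on_real by (metis real_norm_def summable_on_cong)
  hence "((\<lambda>ys. \<Prod>j<l. f j (ys ! j)) has_sum (\<Prod>j<l. infsum (f j) UNIV)) {ys. length ys = l}"
    by (rule has_sum_lists_prod_abs)
  moreover have "infsum (f j) UNIV = (if j = k then 2 * pair_cap (C False) (C True) - 2 else 2)" for j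
    using has_sum_xlog_gap_pair_cap[OF chp] CS unfolding f_def by (auto intro: infsumI)
  moreover have "(\<Prod>j<l. (if j = k then 2 * pair_cap (C False) (C True) - 2 else 2))
      = (2 * pair_cap (C False) (C True) - 2) * 2 ^ (l - 1)"
    using prod_if_eq[OF k, where 'a=real] k by simp
  ultimately show ?thesis by (simp add: f_def)
qed

lemma sum_synth_gap:
  fixes C :: "bool \<Rightarrow> 'o \<Rightarrow> real"
  assumes ch: "is_channel C" and ker: "is_kernel l g"
  shows "(\<Sum>i<l. \<Sum>us\<in>bitvecs i. synth_gap C g l us) = real l * 2 ^ (l - 1) * (2 * pair_cap (C False) (C True) - 2)"
proof -
  define YL where "YL = {ys :: 'o list. length ys = l}"
  have summable: "(\<lambda>ys. branch_gap C g l ys us) summable_on YL" for us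
    unfolding YL_def by (rule branch_gap_summable[OF ch])
  have "(\<Sum>i<l. \<Sum>us\<in>bitvecs i. synth_gap C g l us) = (\<Sum>i<l. \<Sum>\<^sub>\<infinity>ys\<in>YL. \<Sum>us\<in>bitvecs i. branch_gap C g l ys us)"
    unfolding synth_gap_def YL_def[symmetric]
    by (intro sum.cong refl infsum_finite_sum[symmetric] summable) auto
  also have "\<dots> = (\<Sum>\<^sub>\<infinity>ys\<in>YL. \<Sum>i<l. \<Sum>us\<in>bitvecs i. branch_gap C g l ys us)"
    by (intro infsum_finite_sum[symmetric] summable_on_finite_sum summable) auto
  also have "\<dots> = (\<Sum>\<^sub>\<infinity>ys\<in>YL. \<Sum>k<l. \<Prod>j<l. (if j = k then xlog_gap (C False (ys ! j)) (C True (ys ! j))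
      else C False (ys ! j) + C True (ys ! j)))"
    using telescope_kernel_lik[OF ch ker] unfolding YL_def by (intro infsum_cong) (simp cong: if_cong)
  also have "\<dots> = (\<Sum>k<l. (2 * pair_cap (C False) (C True) - 2) * 2 ^ (l - 1))"
    unfolding YL_def by (intro infsumI has_sum_finite_sum has_sum_lists_prod_xlog_gap_at ch) auto
  finally show ?thesis by simp
qed

lemma channel_sym_cap_eq_pair_cap:
  "is_channel C \<Longrightarrow> sym_cap C = pair_cap (C False) (C True)"
  by (rule sym_cap_eq_pair_cap) (auto simp: is_channel_def)

lemma sym_cap_bounds:
  assumes ch: "is_channel C"
  shows "0 \<le> sym_cap C" "sym_cap C \<le> 1"
proof -
  have "prob_pair (C False) (C True)" using ch by (simp add: is_channel_iff_prob_pair)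
  thus "0 \<le> sym_cap C" "sym_cap C \<le> 1"
    using pair_cap_nonneg pair_cap_le_1 channel_sym_cap_eq_pair_cap[OF ch] by auto
qed

lemma sum_sym_cap_synth:
  fixes C :: "bool \<Rightarrow> 'y out \<Rightarrow> real"
  assumes ch: "is_channel C" and ker: "is_kernel l g"
  shows "(\<Sum>i<l. sym_cap (synth l g i C)) = real l * sym_cap C"
proof -
  define K where "K = pair_cap (C False) (C True)"
  have "(\<Sum>i<l. sym_cap (synth l g i C)) = (\<Sum>i<l. 1 + (1 / 2 ^ (l - 1)) * (\<Sum>us\<in>bitvecs i. synth_gap C g l us) / 2)"
    by (intro sum.cong refl sym_cap_synth ch) auto
  also have "\<dots> = real l + (1 / 2 ^ (l - 1)) / 2 * (\<Sum>i<l. \<Sum>us\<in>bitvecs i. synth_gap C g l us)"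
    by (simp add: sum.distrib sum_distrib_left sum_divide_distrib)
  also have "\<dots> = real l + (1 / 2 ^ (l - 1)) / 2 * (real l * 2 ^ (l - 1) * (2 * K - 2))"
    unfolding sum_synth_gap[OF ch ker] K_def ..
  also have "\<dots> = real l * K" by (simp add: field_simps)
  finally show ?thesis using channel_sym_cap_eq_pair_cap[OF ch] K_def by simp
qed

lemma synth_gap_eq_prod_gap:
  assumes "length us = l - 1" "l \<ge> 1"
  shows "synth_gap C g l us = prod_gap C (\<lambda>j. g (us @ [False]) ! j) (\<lambda>j. g (us @ [True]) ! j) {..<l}"
proof -
  have len: "length (us @ [b]) = l" for b using assms by simp
  have "synth_gap C g l us = (\<Sum>\<^sub>\<infinity>ys\<in>{ys. length ys = l}. xlog_gap (kernel_lik C g l ys (us @ [False])) (kernel_lik C g l ys (us @ [True])))"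
    unfolding synth_gap_def branch_gap_def using completions_sum_full[OF len[of False]] completions_sum_full[OF len[of True]] by simp
  also have "\<dots> = (\<Sum>\<^sub>\<infinity>ys\<in>{ys. length ys = l}.
      (\<lambda>h. xlog_gap (\<Prod>j\<in>{..<l}. C (g (us @ [False]) ! j) (h j)) (\<Prod>j\<in>{..<l}. C (g (us @ [True]) ! j) (h j)))
        (restrict (\<lambda>j. ys ! j) {..<l}))"
    unfolding kernel_lik_def by (intro infsum_cong arg_cong2[where f=xlog_gap] prod.cong) auto
  also have "\<dots> = prod_gap C (\<lambda>j. g (us @ [False]) ! j) (\<lambda>j. g (us @ [True]) ! j) {..<l}"
    unfolding prod_gap_def by (rule infsum_reindex_bij_betw[OF bij_betw_nth_lists_PiE])
  finally show ?thesis .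
qed

lemma kernel_length:
  assumes "is_kernel l g" "length u = l"
  shows "length (g u) = l"
  using assms bij_betwE by (fastforce simp: is_kernel_def)

lemma synth_gap_last_ge:
  assumes ch: "is_channel C" and ker: "is_kernel l g" and us: "length us = l - 1" and l: "l \<ge> 1"
  shows "synth_gap C g l us \<ge> -2 + 2 * pair_cap (C False) (C True)"
proof -
  have chp: "prob_pair (C False) (C True)" using ch is_channel_iff_prob_pair by blast
  have len: "length (us @ [b]) = l" for b using us l by simp
  have "g (us @ [False]) \<noteq> g (us @ [True])"
    using ker len inj_on_eq_iff[OF bij_betw_imp_inj_on, of g "bitvecs l" "bitvecs l" "us @ [False]" "us @ [True]"]
    by (simp add: is_kernel_def)
  then obtain k where k: "k < l" "g (us @ [False]) ! k \<noteq> g (us @ [True]) ! k"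
    using kernel_length[OF ker len[of False]] kernel_length[OF ker len[of True]] nth_equalityI by metis
  have "-2 + 2 * pair_cap (C False) (C True) \<le> prod_gap C (\<lambda>j. g (us @ [False]) ! j) (\<lambda>j. g (us @ [True]) ! j) {k}"
    using prod_gap_singleton_ge[OF chp] k by simp
  also have "\<dots> \<le> prod_gap C (\<lambda>j. g (us @ [False]) ! j) (\<lambda>j. g (us @ [True]) ! j) {..<l}"
    by (rule prod_gap_mono[OF chp]) (use k in auto)
  finally show ?thesis using synth_gap_eq_prod_gap[OF us l, of C g] by simp
qed

lemma synth_gap_last_ge_hamming:
  assumes ch: "is_channel C" and ker: "is_kernel l g" and u: "length u = l - 1" and l: "l \<ge> 1"
    and ham: "hamming (g (u @ [False])) (g (u @ [True])) \<ge> 2"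
  shows "synth_gap C g l u \<ge> -2 + 2 * pair_cap (C False) (C True)
    + 2 * pair_cap (C False) (C True) * (\<Sum>\<^sub>\<infinity>y. min (C False y) (C True y))"
proof -
  have chp: "prob_pair (C False) (C True)" using ch is_channel_iff_prob_pair by blast
  define S where "S = {j. j < length (g (u @ [False])) \<and> j < length (g (u @ [True]))
    \<and> g (u @ [False]) ! j \<noteq> g (u @ [True]) ! j}"
  obtain i T where iT: "S = insert i T" "1 \<le> card T" "i \<notin> T"
    using ham card_le_Suc_iff[of 1 S] by (auto simp: hamming_def S_def)
  then obtain k where "k \<in> T" by fastforce
  hence ik: "i \<in> S" "k \<in> S" "i \<noteq> k" using iT by auto
  have len: "length (u @ [b]) = l" for b using u l by simp
  hence ik2: "i < l" "k < l" "g (u @ [False]) ! i \<noteq> g (u @ [True]) ! i" "g (u @ [False]) ! k \<noteq> g (u @ [True]) ! k"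
    using ik kernel_length[OF ker len[of False]] by (auto simp: S_def)
  have "-2 + 2 * pair_cap (C False) (C True) + 2 * pair_cap (C False) (C True) * (\<Sum>\<^sub>\<infinity>y. min (C False y) (C True y))
      \<le> prod_gap C (\<lambda>j. g (u @ [False]) ! j) (\<lambda>j. g (u @ [True]) ! j) {i, k}"
    by (rule prod_gap_doubleton_ge[OF chp]) (use ik2 ik(3) in auto)
  also have "\<dots> \<le> prod_gap C (\<lambda>j. g (u @ [False]) ! j) (\<lambda>j. g (u @ [True]) ! j) {..<l}"
    by (rule prod_gap_mono[OF chp]) (use ik2 in auto)
  finally show ?thesis using synth_gap_eq_prod_gap[OF u l, of C g] by simp
qed

lemma sym_cap_synth_last_ge:
  fixes C :: "bool \<Rightarrow> 'y out \<Rightarrow> real"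
  assumes ch: "is_channel C" and ker: "is_kernel l g" and l: "l \<ge> 1"
    and ham: "\<exists>u. length u = l - 1 \<and> hamming (g (u @ [False])) (g (u @ [True])) \<ge> 2"
  shows "sym_cap (synth l g (l - 1) C) \<ge> sym_cap C
    + sym_cap C * (\<Sum>\<^sub>\<infinity>y. min (C False y) (C True y)) / 2 ^ (l - 1)"
proof -
  define K where "K = pair_cap (C False) (C True)"
  define Pm where "Pm = (\<Sum>\<^sub>\<infinity>y. min (C False y) (C True y))"
  obtain u where u: "length u = l - 1" "hamming (g (u @ [False])) (g (u @ [True])) \<ge> 2"
    using ham by blast
  have uL: "u \<in> bitvecs (l - 1)" using u by simp
  have "(\<Sum>us\<in>bitvecs (l - 1). -2 + 2 * K) + 2 * K * Pm
      = (-2 + 2 * K + 2 * K * Pm) + (\<Sum>us\<in>bitvecs (l - 1) - {u}. -2 + 2 * K)"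
    using sum.remove[OF finite_bitvecs uL, of "\<lambda>_. -2 + 2 * K"] by simp
  also have "\<dots> \<le> synth_gap C g l u + (\<Sum>us\<in>bitvecs (l - 1) - {u}. synth_gap C g l us)"
    using synth_gap_last_ge_hamming[OF ch ker u(1) l u(2)] synth_gap_last_ge[OF ch ker _ l]
    unfolding K_def Pm_def by (intro add_mono sum_mono) auto
  also have "\<dots> = (\<Sum>us\<in>bitvecs (l - 1). synth_gap C g l us)"
    by (rule sum.remove[OF finite_bitvecs uL, symmetric])
  finally have S: "(-2 + 2 * K) * 2 ^ (l - 1) + 2 * K * Pm \<le> (\<Sum>us\<in>bitvecs (l - 1). synth_gap C g l us)"
    by (simp add: card_bitvecs mult.commute)
  have "sym_cap C + sym_cap C * Pm / 2 ^ (l - 1)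
      = 1 + (1 / 2 ^ (l - 1)) * ((-2 + 2 * K) * 2 ^ (l - 1) + 2 * K * Pm) / 2"
    using channel_sym_cap_eq_pair_cap[OF ch] by (simp add: K_def field_simps)
  also have "\<dots> \<le> 1 + (1 / 2 ^ (l - 1)) * (\<Sum>us\<in>bitvecs (l - 1). synth_gap C g l us) / 2"
    using S by (simp add: divide_right_mono)
  also have "\<dots> = sym_cap (synth l g (l - 1) C)"
    using sym_cap_synth[OF ch, of "l - 1" l g] l by simp
  finally show ?thesis unfolding Pm_def .
qed

lemma sym_cap_synth_last_gain:
  fixes C :: "bool \<Rightarrow> 'y out \<Rightarrow> real"
  assumes ch: "is_channel C" and ker: "is_kernel l g" and l: "l \<ge> 1"
    and ham: "\<exists>u. length u = l - 1 \<and> hamming (g (u @ [False])) (g (u @ [True])) \<ge> 2"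
    and d: "d > 0" "d \<le> sym_cap C" "sym_cap C \<le> 1 - d"
  shows "sym_cap (synth l g (l - 1) C) \<ge> sym_cap C + d^3 * (2 * (ln 2)^2 / 9) / 2 ^ (l - 1)"
proof -
  have chp: "prob_pair (C False) (C True)" using ch is_channel_iff_prob_pair by blast
  have "(\<Sum>\<^sub>\<infinity>y. min (C False y) (C True y)) \<ge> d^2 * (2 * (ln 2)^2 / 9)"
    using overlap_ge_if_pair_cap_le[OF chp d(1)] d channel_sym_cap_eq_pair_cap[OF ch] by simp
  hence "sym_cap C * (\<Sum>\<^sub>\<infinity>y. min (C False y) (C True y)) \<ge> d * (d^2 * (2 * (ln 2)^2 / 9))"
    using d by (intro mult_mono) auto
  hence "d^3 * (2 * (ln 2)^2 / 9) / 2 ^ (l - 1) \<le> sym_cap C * (\<Sum>\<^sub>\<infinity>y. min (C False y) (C True y)) / 2 ^ (l - 1)"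
    by (intro divide_right_mono) (auto simp: power3_eq_cube power2_eq_square algebra_simps)
  thus ?thesis using sym_cap_synth_last_ge[OF ch ker l ham] by simp
qed

section \<open>Channels along a path of the construction\<close>

lemma inj_Base: "inj Base"
  by (auto simp: inj_on_def)

lemma is_channel_lift_chan:
  assumes ch: "is_channel W"
  shows "is_channel (lift_chan W)"
  unfolding is_channel_def
proof (intro conjI allI)
  fix x z
  show "0 \<le> lift_chan W x z" using ch by (cases z) (auto simp: lift_chan_def is_channel_def)
next
  fix x
  have "(W x has_sum 1) UNIV" using ch by (auto simp: is_channel_def)
  hence "(lift_chan W x has_sum 1) (range Base)"
    by (simp add: has_sum_reindex[OF inj_Base] o_def lift_chan_def)
  moreover have "(lift_chan W x has_sum 1) (range Base) \<longleftrightarrow> (lift_chan W x has_sum 1) UNIV"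
    by (rule has_sum_cong_neutral) (auto simp: lift_chan_def split: out.splits)
  ultimately show "(lift_chan W x has_sum 1) UNIV" by simp
qed

lemma sym_cap_lift_chan:
  assumes ch: "is_channel W"
  shows "sym_cap (lift_chan W) = sym_cap W"
proof -
  have "sym_cap (lift_chan W) = pair_cap (lift_chan W False) (lift_chan W True)"
    by (rule channel_sym_cap_eq_pair_cap[OF is_channel_lift_chan[OF ch]])
  also have "\<dots> = (\<Sum>\<^sub>\<infinity>z\<in>range Base. cap_term (lift_chan W False z) (lift_chan W True z))"
    unfolding pair_cap_def
    by (rule infsum_cong_neutral) (auto simp: lift_chan_def cap_term_def split: out.splits)
  also have "\<dots> = pair_cap (W False) (W True)"
    by (simp add: pair_cap_def infsum_reindex[OF inj_Base] o_def lift_chan_def)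
  also have "\<dots> = sym_cap W" using channel_sym_cap_eq_pair_cap[OF ch] by simp
  finally show ?thesis .
qed

definition synth_path :: "nat \<Rightarrow> (bool list \<Rightarrow> bool list) \<Rightarrow> (bool \<Rightarrow> 'y \<Rightarrow> real) \<Rightarrow> nat list
    \<Rightarrow> bool \<Rightarrow> 'y out \<Rightarrow> real" where
  "synth_path l g W bs = foldl (\<lambda>V b. synth l g b V) (lift_chan W) bs"

lemma synth_path_snoc: "synth_path l g W (bs @ [b]) = synth l g b (synth_path l g W bs)"
  by (simp add: synth_path_def)

lemma chan_seq_eq_synth_path: "chan_seq l g W B \<omega> n = synth_path l g W (map (\<lambda>k. B k \<omega>) [1..<Suc n])"
  by (induction n) (auto simp: synth_path_def)

lemma is_channel_synth_path:
  assumes "is_channel W" "set bs \<subseteq> {..<l}"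
  shows "is_channel (synth_path l g W bs)"
  using assms(2)
proof (induction bs rule: rev_induct)
  case Nil
  thus ?case using is_channel_lift_chan[OF assms(1)] by (simp add: synth_path_def)
next
  case (snoc b bs)
  thus ?case by (auto simp: synth_path_snoc intro!: is_channel_synth)
qed

section \<open>Polarization of a bounded martingale on the \<open>l\<close>-ary tree\<close>

lemma tendsto_0_or_1_if_jumps_vanish:
  fixes x :: "nat \<Rightarrow> real"
  assumes bounds: "\<And>n. 0 \<le> x n \<and> x n \<le> 1"
    and jumps: "\<And>e. e > 0 \<Longrightarrow> \<forall>\<^sub>F n in sequentially. \<bar>x (Suc n) - x n\<bar> < e"
    and ends: "\<And>e. e > 0 \<Longrightarrow> \<forall>\<^sub>F n in sequentially. x n < e \<or> 1 - e < x n"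
  shows "x \<longlonglongrightarrow> 0 \<or> x \<longlonglongrightarrow> 1"
proof -
  obtain N where N: "\<And>n. n \<ge> N \<Longrightarrow> \<bar>x (Suc n) - x n\<bar> < 1/4 \<and> (x n < 1/4 \<or> 3/4 < x n)"
    using eventually_conj[OF jumps ends, of "1/4" "1/4"] unfolding eventually_sequentially by force
  \<comment> \<open>from \<open>N\<close> on, steps are too short to cross the gap \<open>[1/4, 3/4]\<close>\<close>
  have stays: "x n < 1/4 \<longleftrightarrow> x N < 1/4" if "n \<ge> N" for n
    using that
  proof (induction n rule: dec_induct)
    case (step n)
    thus ?case using N[of n] N[of "Suc n"] by auto
  qed simp
  show ?thesis
  proof (cases "x N < 1/4")
    case True
    have "\<forall>\<^sub>F n in sequentially. dist (x n) 0 < e" if "e > 0" for e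
      using ends[OF that] eventually_ge_at_top[of N]
    proof eventually_elim
      case (elim n)
      hence "x n < 1/4" using stays True by auto
      thus ?case using elim bounds[of n] by auto
    qed
    hence "x \<longlonglongrightarrow> 0" by (rule tendstoI)
    thus ?thesis ..
  next
    case False
    have "\<forall>\<^sub>F n in sequentially. dist (x n) 1 < e" if "e > 0" for e
      using ends[OF that] eventually_ge_at_top[of N]
    proof eventually_elim
      case (elim n)
      hence "3/4 < x n" using stays False N[of n] by auto
      thus ?case using elim bounds[of n] by (auto simp: dist_real_def)
    qed
    hence "x \<longlonglongrightarrow> 1" by (rule tendstoI)
    thus ?thesis ..
  qed
qed

definition index_lists :: "nat \<Rightarrow> nat \<Rightarrow> nat list set" where
  "index_lists l n = {bs. set bs \<subseteq> {..<l} \<and> length bs = n}"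

lemma finite_index_lists[simp]: "finite (index_lists l n)"
  unfolding index_lists_def by (rule finite_lists_length_eq) simp

lemma card_index_lists: "card (index_lists l n) = l ^ n"
  unfolding index_lists_def using card_lists_length_eq[of "{..<l}" n] by simp

lemma sum_index_lists_Suc: "(\<Sum>bs\<in>index_lists l (Suc n). h bs) = (\<Sum>bs\<in>index_lists l n. \<Sum>i<l. h (bs @ [i]))"
proof -
  have e: "index_lists l (Suc n) = (\<lambda>(bs,i). bs @ [i]) ` (index_lists l n \<times> {..<l})"
  proof
    show "index_lists l (Suc n) \<subseteq> (\<lambda>(bs,i). bs @ [i]) ` (index_lists l n \<times> {..<l})"
    proof
      fix x assume x: "x \<in> index_lists l (Suc n)"
      hence "x = butlast x @ [last x]" by (intro append_butlast_last_id[symmetric]) (auto simp: index_lists_def)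
      moreover have "butlast x \<in> index_lists l n" "last x \<in> {..<l}" using x
        by (auto simp: index_lists_def dest: in_set_butlastD) (metis last_in_set list.size(3) nat.distinct(1) subsetD lessThan_iff)
      ultimately show "x \<in> (\<lambda>(bs,i). bs @ [i]) ` (index_lists l n \<times> {..<l})" by force
    qed
  qed (auto simp: index_lists_def)
  have i: "inj_on (\<lambda>(bs,i). bs @ [i]) (index_lists l n \<times> {..<l})" by (auto simp: inj_on_def)
  have "(\<Sum>bs\<in>index_lists l (Suc n). h bs) = (\<Sum>(bs,i)\<in>index_lists l n \<times> {..<l}. h (bs @ [i]))"
    unfolding e by (subst sum.reindex[OF i]) (simp add: case_prod_unfold)
  also have "\<dots> = (\<Sum>bs\<in>index_lists l n. \<Sum>i<l. h (bs @ [i]))" by (rule sum.cartesian_product[symmetric])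
  finally show ?thesis .
qed

lemma index_lists_set: "bs \<in> index_lists l n \<Longrightarrow> set bs \<subseteq> {..<l}" by (simp add: index_lists_def)
locale tree_martingale =
  fixes l :: nat and f :: "nat list \<Rightarrow> real"
  assumes l_pos: "l \<ge> 1"
    and bounded: "\<And>bs. set bs \<subseteq> {..<l} \<Longrightarrow> 0 \<le> f bs \<and> f bs \<le> 1"
    and average: "\<And>bs. set bs \<subseteq> {..<l} \<Longrightarrow> (\<Sum>i<l. f (bs @ [i])) = real l * f bs"
begin

lemma sum_index_lists: "(\<Sum>bs\<in>index_lists l n. f bs) = real l ^ n * f []"
proof (induction n)
  case 0
  have "index_lists l 0 = {[]}" by (auto simp: index_lists_def)
  thus ?case by simp
next
  case (Suc n)
  have "(\<Sum>bs\<in>index_lists l (Suc n). f bs) = (\<Sum>bs\<in>index_lists l n. real l * f bs)"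
    unfolding sum_index_lists_Suc by (intro sum.cong refl average index_lists_set) auto
  also have "\<dots> = real l * (\<Sum>bs\<in>index_lists l n. f bs)" by (simp add: sum_distrib_left)
  finally show ?case using Suc by simp
qed

definition mean_sq :: "nat \<Rightarrow> real" where "mean_sq n = (\<Sum>bs\<in>index_lists l n. (f bs)^2) / real l ^ n"
definition sq_incr :: "nat \<Rightarrow> real" where "sq_incr n = (\<Sum>bs\<in>index_lists l n. \<Sum>i<l. (f (bs @ [i]) - f bs)^2) / real l ^ Suc n"

lemma sq_incr_eq: "sq_incr n = mean_sq (Suc n) - mean_sq n"
proof -
  have pt: "(\<Sum>i<l. (f (bs @ [i]) - f bs)^2) = (\<Sum>i<l. (f (bs @ [i]))^2) - real l * (f bs)^2"
    if "bs \<in> index_lists l n" for bs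
  proof -
    have "(\<Sum>i<l. (f (bs @ [i]) - f bs)^2) = (\<Sum>i<l. (f (bs @ [i]))^2 - 2 * f bs * f (bs @ [i]) + (f bs)^2)"
      by (intro sum.cong refl) (simp add: power2_diff)
    also have "\<dots> = (\<Sum>i<l. (f (bs @ [i]))^2) - 2 * f bs * (\<Sum>i<l. f (bs @ [i])) + real l * (f bs)^2"
      by (simp add: sum.distrib sum_subtractf sum_distrib_left)
    also have "(\<Sum>i<l. f (bs @ [i])) = real l * f bs" using average index_lists_set[OF that] by blast
    finally show ?thesis by (simp add: power2_eq_square algebra_simps)
  qed
  have "(\<Sum>bs\<in>index_lists l n. \<Sum>i<l. (f (bs @ [i]) - f bs)^2) = (\<Sum>bs\<in>index_lists l (Suc n). (f bs)^2) - real l * (\<Sum>bs\<in>index_lists l n. (f bs)^2)"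
    unfolding sum_index_lists_Suc by (simp add: pt sum_subtractf sum_distrib_left)
  thus ?thesis using l_pos by (simp add: sq_incr_def mean_sq_def field_simps)
qed

lemma mean_sq_bounds: "0 \<le> mean_sq n" "mean_sq n \<le> 1"
proof -
  have "(\<Sum>bs\<in>index_lists l n. (f bs)^2) \<le> (\<Sum>bs\<in>index_lists l n. 1)"
    by (intro sum_mono) (use bounded index_lists_set in \<open>auto simp: power_le_one\<close>)
  also have "\<dots> = real l ^ n" by (simp add: card_index_lists)
  finally have "(\<Sum>bs\<in>index_lists l n. (f bs)^2) \<le> real l ^ n" .
  thus "mean_sq n \<le> 1" using l_pos by (simp add: mean_sq_def)
  show "0 \<le> mean_sq n" by (simp add: mean_sq_def sum_nonneg)
qed

lemma sq_incr_nonneg: "sq_incr n \<ge> 0" by (simp add: sq_incr_def sum_nonneg)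

lemma summable_sq_incr: "summable sq_incr"
proof (rule summableI_nonneg_bounded[where x=1])
  fix n show "sq_incr n \<ge> 0" by (rule sq_incr_nonneg)
  show "(\<Sum>i<n. sq_incr i) \<le> 1"
    using mean_sq_bounds[of n] mean_sq_bounds[of 0] by (simp add: sq_incr_eq sum_lessThan_telescope)
qed

end
locale uniform_indices = prob_space M for M :: "'a measure" +
  fixes B :: "nat \<Rightarrow> 'a \<Rightarrow> nat" and l :: nat
  assumes indep: "indep_vars (\<lambda>_. count_space UNIV) B {1..}"
    and dist: "\<And>n. n \<ge> 1 \<Longrightarrow> distr M (count_space UNIV) (B n) = measure_pmf (pmf_of_set {..<l})"
    and l_pos: "l \<ge> 1"
begin

lemma measurable_B: "k \<ge> 1 \<Longrightarrow> B k \<in> measurable M (count_space UNIV)"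
  using indep unfolding indep_vars_def by auto

lemma B_eq_sets: "k \<ge> 1 \<Longrightarrow> {\<omega> \<in> space M. B k \<omega> = b} \<in> sets M"
  using measurable_B[of k] by (simp add: measurable_count_space_eq2_countable vimage_def Int_def conj_commute)

lemma prob_B_eq: "k \<ge> 1 \<Longrightarrow> prob {\<omega> \<in> space M. B k \<omega> = b} = (if b < l then 1 / real l else 0)"
proof -
  assume k: "k \<ge> 1"
  have ne: "{..<l} \<noteq> {}" using l_pos by (simp add: lessThan_empty_iff)
  have "prob {\<omega> \<in> space M. B k \<omega> = b} = measure (distr M (count_space UNIV) (B k)) {b}"
    by (subst measure_distr[OF measurable_B[OF k]]) (auto simp: vimage_def Int_def conj_commute)
  also have "\<dots> = measure (measure_pmf (pmf_of_set {..<l})) {b}" using dist[OF k] by simp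
  also have "\<dots> = pmf (pmf_of_set {..<l}) b" by (simp add: measure_pmf_single)
  also have "\<dots> = (if b < l then 1 / real l else 0)" using ne by (simp add: indicator_def)
  finally show ?thesis .
qed

lemma AE_B_less: "AE \<omega> in M. \<forall>k\<ge>1. B k \<omega> < l"
proof -
  have "AE \<omega> in M. B k \<omega> < l" if k: "k \<ge> 1" for k
  proof (rule AE_distrD[OF measurable_B[OF k]])
    have ne: "{..<l} \<noteq> {}" using l_pos by (simp add: lessThan_empty_iff)
    have "AE x in measure_pmf (pmf_of_set {..<l}). x \<in> set_pmf (pmf_of_set {..<l})" by (rule AE_measure_pmf)
    thus "AE x in distr M (count_space UNIV) (B k). x < l" unfolding dist[OF k] using ne by simp
  qed
  hence "\<forall>k. AE \<omega> in M. k \<ge> 1 \<longrightarrow> B k \<omega> < l" by auto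
  thus ?thesis by (subst (asm) AE_all_countable[symmetric]) auto
qed

definition index_path :: "nat \<Rightarrow> 'a \<Rightarrow> nat list" where
  "index_path n \<omega> = map (\<lambda>k. B k \<omega>) [1..<Suc n]"

lemma length_index_path[simp]: "length (index_path n \<omega>) = n" by (simp add: index_path_def)

lemma index_path_Suc: "index_path (Suc n) \<omega> = index_path n \<omega> @ [B (Suc n) \<omega>]" by (simp add: index_path_def)

lemma nth_index_path: "k < n \<Longrightarrow> index_path n \<omega> ! k = B (Suc k) \<omega>"
  by (simp add: index_path_def del: upt_Suc)

lemma index_path_eq_iff: "index_path n \<omega> = bs \<longleftrightarrow> length bs = n \<and> (\<forall>k<n. B (Suc k) \<omega> = bs ! k)"
proof -
  have "index_path n \<omega> = bs \<longleftrightarrow> length (index_path n \<omega>) = length bs \<and> (\<forall>k<length (index_path n \<omega>). index_path n \<omega> ! k = bs ! k)"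
    by (rule list_eq_iff_nth_eq)
  thus ?thesis using nth_index_path[of _ n \<omega>] by auto
qed

lemma index_path_eq_event: "{\<omega> \<in> space M. index_path n \<omega> = bs} =
    (if length bs = n then {\<omega> \<in> space M. \<forall>k<n. B (Suc k) \<omega> = bs ! k} else {})"
  unfolding index_path_eq_iff by auto

lemma index_path_eq_sets: "{\<omega> \<in> space M. index_path n \<omega> = bs} \<in> sets M"
proof (cases "length bs = n")
  case True
  have "{\<omega> \<in> space M. \<forall>k<n. B (Suc k) \<omega> = bs ! k} \<in> sets M"
  proof (cases "n = 0")
    case True thus ?thesis by simp
  next
    case False
    have "{\<omega> \<in> space M. \<forall>k<n. B (Suc k) \<omega> = bs ! k} = (\<Inter>k\<in>{..<n}. {\<omega> \<in> space M. B (Suc k) \<omega> = bs ! k})"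
      using False by auto
    also have "\<dots> \<in> sets M" using False by (intro sets.finite_INT B_eq_sets) auto
    finally show ?thesis .
  qed
  moreover have "{\<omega> \<in> space M. index_path n \<omega> = bs} = {\<omega> \<in> space M. \<forall>k<n. B (Suc k) \<omega> = bs ! k}"
    using True unfolding index_path_eq_iff by blast
  ultimately show ?thesis by (simp only:)
next
  case False
  hence "{\<omega> \<in> space M. index_path n \<omega> = bs} = {}" unfolding index_path_eq_iff by blast
  thus ?thesis by (simp only: sets.empty_sets)
qed

lemma measurable_index_path: "index_path n \<in> measurable M (count_space UNIV)"
  unfolding measurable_count_space_eq2_countable
  using index_path_eq_sets by (auto simp: vimage_def Int_def conj_commute)

lemma prob_index_path_eq: "bs \<in> index_lists l n \<Longrightarrow> prob {\<omega> \<in> space M. index_path n \<omega> = bs} = (1 / real l) ^ n"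
proof -
  assume bs: "bs \<in> index_lists l n"
  hence len: "length bs = n" and sb: "set bs \<subseteq> {..<l}" by (auto simp: index_lists_def)
  show ?thesis
  proof (cases "n = 0")
    case True
    have "{\<omega> \<in> space M. index_path n \<omega> = bs} = space M" using True len by (auto simp: index_path_def)
    thus ?thesis using True by (simp add: prob_space)
  next
    case False
    have e: "{\<omega> \<in> space M. index_path n \<omega> = bs} = (\<Inter>j\<in>{1..n}. B j -` {bs ! (j - 1)} \<inter> space M)"
      using False len by (auto simp: index_path_eq_event) (metis Suc_le_eq diff_Suc_1 le_add1 plus_1_eq_Suc Suc_pred)+
    have ind: "indep_sets (\<lambda>i. sigma_sets (space M) {B i -` A \<inter> space M | A. A \<in> sets (count_space UNIV)}) {1..}"
      using indep unfolding indep_vars_def by auto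
    have "prob (\<Inter>j\<in>{1..n}. B j -` {bs ! (j - 1)} \<inter> space M) = (\<Prod>j\<in>{1..n}. prob (B j -` {bs ! (j - 1)} \<inter> space M))"
      by (rule indep_setsD[OF ind]) (use False in \<open>auto intro: sigma_sets.Basic\<close>)
    also have "\<dots> = (\<Prod>j\<in>{1..n}. 1 / real l)"
    proof (intro prod.cong refl)
      fix j assume j: "j \<in> {1..n}"
      have "bs ! (j - 1) < l" using sb j len by (auto simp: subset_iff)
      moreover have "B j -` {bs ! (j - 1)} \<inter> space M = {\<omega> \<in> space M. B j \<omega> = bs ! (j - 1)}" by auto
      ultimately show "prob (B j -` {bs ! (j - 1)} \<inter> space M) = 1 / real l" using prob_B_eq[of j] j by simp
    qed
    also have "\<dots> = (1 / real l) ^ n" by simp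
    finally show ?thesis using e by simp
  qed
qed

lemma AE_index_path_in_index_lists: "AE \<omega> in M. \<forall>n. index_path n \<omega> \<in> index_lists l n"
  using AE_B_less
proof eventually_elim
  fix \<omega> assume a: "\<forall>k\<ge>1. B k \<omega> < l"
  show "\<forall>n. index_path n \<omega> \<in> index_lists l n"
    using a by (auto simp: index_lists_def index_path_def)
qed

lemma index_path_in_sets: "{\<omega> \<in> space M. index_path n \<omega> \<in> S} \<in> sets M"
proof -
  have "index_path n -` S \<inter> space M \<in> sets M" by (rule measurable_sets[OF measurable_index_path]) simp
  moreover have "index_path n -` S \<inter> space M = {\<omega> \<in> space M. index_path n \<omega> \<in> S}" by auto
  ultimately show ?thesis by simp
qed

lemma prob_index_path_in: "prob {\<omega> \<in> space M. index_path n \<omega> \<in> S} = real (card (S \<inter> index_lists l n)) / real l ^ n"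
proof -
  define U where "U = (\<Union>bs\<in>S \<inter> index_lists l n. {\<omega> \<in> space M. index_path n \<omega> = bs})"
  have Us: "U \<in> sets M" unfolding U_def by (intro sets.finite_UN index_path_eq_sets) auto
  have "prob {\<omega> \<in> space M. index_path n \<omega> \<in> S} = prob U"
  proof (rule finite_measure_eq_AE[OF _ index_path_in_sets Us])
    show "AE x in M. (x \<in> {\<omega> \<in> space M. index_path n \<omega> \<in> S}) = (x \<in> U)"
      using AE_index_path_in_index_lists by eventually_elim (auto simp: U_def)
  qed
  also have "prob U = (\<Sum>bs\<in>S \<inter> index_lists l n. prob {\<omega> \<in> space M. index_path n \<omega> = bs})"
    unfolding U_def
    by (rule measure_finite_Union) (auto simp: disjoint_family_on_def index_path_eq_sets emeasure_eq_measure)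
  also have "\<dots> = (\<Sum>bs\<in>S \<inter> index_lists l n. (1 / real l) ^ n)"
    by (intro sum.cong refl prob_index_path_eq) auto
  also have "\<dots> = real (card (S \<inter> index_lists l n)) / real l ^ n" by (simp add: power_divide)
  finally show ?thesis .
qed

lemma prob_index_path_in_le:
  assumes "\<And>bs. bs \<in> index_lists l n \<Longrightarrow> w bs \<ge> 0" "\<And>bs. bs \<in> S \<Longrightarrow> bs \<in> index_lists l n \<Longrightarrow> w bs \<ge> 1"
  shows "prob {\<omega> \<in> space M. index_path n \<omega> \<in> S} \<le> (\<Sum>bs\<in>index_lists l n. w bs) / real l ^ n"
proof -
  have "real (card (S \<inter> index_lists l n)) = (\<Sum>bs\<in>S \<inter> index_lists l n. 1)" by simp
  also have "\<dots> \<le> (\<Sum>bs\<in>S \<inter> index_lists l n. w bs)" by (intro sum_mono) (use assms in auto)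
  also have "\<dots> \<le> (\<Sum>bs\<in>index_lists l n. w bs)" by (intro sum_mono2) (use assms in auto)
  finally show ?thesis unfolding prob_index_path_in by (intro divide_right_mono) auto
qed

lemma measurable_comp_index_path: "(\<lambda>\<omega>. h (index_path n \<omega>) :: real) \<in> borel_measurable M"
  by (rule measurable_compose[OF measurable_index_path]) simp

lemma integral_comp_index_path: "integral\<^sup>L M (\<lambda>\<omega>. h (index_path n \<omega>) :: real) = (\<Sum>bs\<in>index_lists l n. h bs) / real l ^ n"
proof -
  have "integral\<^sup>L M (\<lambda>\<omega>. h (index_path n \<omega>)) = integral\<^sup>L M (\<lambda>\<omega>. \<Sum>bs\<in>index_lists l n. h bs * indicator {\<omega> \<in> space M. index_path n \<omega> = bs} \<omega>)"
  proof (rule integral_cong_AE)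
    show "(\<lambda>\<omega>. h (index_path n \<omega>)) \<in> borel_measurable M" by (rule measurable_comp_index_path)
    show "(\<lambda>\<omega>. \<Sum>bs\<in>index_lists l n. h bs * indicator {\<omega> \<in> space M. index_path n \<omega> = bs} \<omega>) \<in> borel_measurable M"
      by (intro borel_measurable_sum borel_measurable_times borel_measurable_const borel_measurable_indicator index_path_eq_sets)
    show "AE \<omega> in M. h (index_path n \<omega>) = (\<Sum>bs\<in>index_lists l n. h bs * indicator {\<omega> \<in> space M. index_path n \<omega> = bs} \<omega>)"
      using AE_index_path_in_index_lists AE_space
    proof eventually_elim
      fix \<omega> assume a: "\<forall>n. index_path n \<omega> \<in> index_lists l n" and sp: "\<omega> \<in> space M"
      have "(\<Sum>bs\<in>index_lists l n. h bs * indicator {\<omega> \<in> space M. index_path n \<omega> = bs} \<omega>)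
          = (\<Sum>bs\<in>index_lists l n. (if bs = index_path n \<omega> then h bs else 0))"
        using sp by (intro sum.cong refl) (auto simp: indicator_def)
      also have "\<dots> = h (index_path n \<omega>)" using a by (simp add: sum.delta')
      finally show "h (index_path n \<omega>) = (\<Sum>bs\<in>index_lists l n. h bs * indicator {\<omega> \<in> space M. index_path n \<omega> = bs} \<omega>)" by simp
    qed
  qed
  also have "\<dots> = (\<Sum>bs\<in>index_lists l n. h bs * prob {\<omega> \<in> space M. index_path n \<omega> = bs})"
  proof -
    have int: "integrable M (\<lambda>\<omega>. h bs * indicator {\<omega> \<in> space M. index_path n \<omega> = bs} \<omega>)" for bs
      by (intro integrable_mult_right integrable_real_indicator index_path_eq_sets) (simp add: emeasure_eq_measure)
    have "integral\<^sup>L M (\<lambda>\<omega>. \<Sum>bs\<in>index_lists l n. h bs * indicator {\<omega> \<in> space M. index_path n \<omega> = bs} \<omega>)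
        = (\<Sum>bs\<in>index_lists l n. integral\<^sup>L M (\<lambda>\<omega>. h bs * indicator {\<omega> \<in> space M. index_path n \<omega> = bs} \<omega>))"
      by (rule Bochner_Integration.integral_sum[where f="\<lambda>bs \<omega>. h bs * indicator {\<omega> \<in> space M. index_path n \<omega> = bs} \<omega>"]) (rule int)
    also have "\<dots> = (\<Sum>bs\<in>index_lists l n. h bs * prob {\<omega> \<in> space M. index_path n \<omega> = bs})"
    proof (intro sum.cong refl)
      fix bs
      have "{\<omega> \<in> space M. index_path n \<omega> = bs} \<inter> space M = {\<omega> \<in> space M. index_path n \<omega> = bs}" by auto
      thus "integral\<^sup>L M (\<lambda>\<omega>. h bs * indicator {\<omega> \<in> space M. index_path n \<omega> = bs} \<omega>) = h bs * prob {\<omega> \<in> space M. index_path n \<omega> = bs}"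
        by simp
    qed
    finally show ?thesis .
  qed
  also have "\<dots> = (\<Sum>bs\<in>index_lists l n. h bs * (1 / real l) ^ n)" by (intro sum.cong refl) (simp add: prob_index_path_eq)
  also have "\<dots> = (\<Sum>bs\<in>index_lists l n. h bs) / real l ^ n" by (simp add: sum_divide_distrib power_divide)
  finally show ?thesis .
qed

end

lemma AE_all_pos_eventually:
  fixes P :: "real \<Rightarrow> 'a \<Rightarrow> 'b \<Rightarrow> bool"
  assumes AE: "\<And>e. e > 0 \<Longrightarrow> AE \<omega> in M. \<forall>\<^sub>F n in F. P e \<omega> n"
    and mono: "\<And>e e' \<omega> n. 0 < e \<Longrightarrow> e \<le> e' \<Longrightarrow> P e \<omega> n \<Longrightarrow> P e' \<omega> n"
  shows "AE \<omega> in M. \<forall>e>0. \<forall>\<^sub>F n in F. P e \<omega> n"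
proof -
  have "AE \<omega> in M. \<forall>k. \<forall>\<^sub>F n in F. P (inverse (real (Suc k))) \<omega> n"
    by (subst AE_all_countable) (auto intro: AE)
  thus ?thesis
  proof eventually_elim
    case (elim \<omega>)
    show ?case
    proof (intro allI impI)
      fix e :: real assume "e > 0"
      then obtain k where k: "inverse (real (Suc k)) < e" using reals_Archimedean by blast
      have "0 < inverse (real (Suc k))" by simp
      thus "\<forall>\<^sub>F n in F. P e \<omega> n"
        using elim[rule_format, of k] mono[OF _ less_imp_le[OF k]] by (auto elim!: eventually_mono)
    qed
  qed
qed

locale polarizing_tree_martingale = uniform_indices M B l + tree_martingale l f
  for M :: "'a measure" and B l f +
  assumes last_child_gain: "\<And>d. d > 0 \<Longrightarrow> \<exists>\<kappa>>0. \<forall>bs. set bs \<subseteq> {..<l} \<longrightarrow> d \<le> f bs \<longrightarrow> f bs \<le> 1 - d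
      \<longrightarrow> f (bs @ [l - 1]) \<ge> f bs + \<kappa>"
begin

definition X :: "nat \<Rightarrow> 'a \<Rightarrow> real" where
  "X n \<omega> = f (index_path n \<omega>)"

lemma measurable_X [measurable]: "X n \<in> borel_measurable M"
  unfolding X_def by (rule measurable_comp_index_path)

lemma sum_sq_incr: "(\<Sum>bs\<in>index_lists l n. \<Sum>i<l. (f (bs @ [i]) - f bs)^2) = sq_incr n * real l ^ Suc n"
  using l_pos by (simp add: sq_incr_def)

lemma prob_jump_le:
  assumes e: "e > 0"
  shows "prob {\<omega> \<in> space M. e \<le> \<bar>X (Suc n) \<omega> - X n \<omega>\<bar>} \<le> sq_incr n / e^2"
proof -
  have "prob {\<omega> \<in> space M. e \<le> \<bar>X (Suc n) \<omega> - X n \<omega>\<bar>}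
      = prob {\<omega> \<in> space M. index_path (Suc n) \<omega> \<in> {bs. e \<le> \<bar>f bs - f (butlast bs)\<bar>}}"
    by (simp add: X_def index_path_Suc)
  also have "\<dots> \<le> (\<Sum>bs\<in>index_lists l (Suc n). (f bs - f (butlast bs))^2 / e^2) / real l ^ Suc n"
  proof (rule prob_index_path_in_le)
    fix bs assume "bs \<in> {bs. e \<le> \<bar>f bs - f (butlast bs)\<bar>}"
    hence "e^2 \<le> \<bar>f bs - f (butlast bs)\<bar>^2" using e by (intro power_mono) auto
    thus "1 \<le> (f bs - f (butlast bs))^2 / e^2" using e by simp
  qed auto
  also have "\<dots> = sq_incr n / e^2"
    using l_pos by (simp add: sum_index_lists_Suc sum_divide_distrib[symmetric] sum_sq_incr)
  finally show ?thesis .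
qed

lemma prob_middle_le:
  assumes k: "\<kappa> > 0"
    and gain: "\<And>bs. set bs \<subseteq> {..<l} \<Longrightarrow> d \<le> f bs \<Longrightarrow> f bs \<le> 1 - d \<Longrightarrow> f (bs @ [l - 1]) \<ge> f bs + \<kappa>"
  shows "prob {\<omega> \<in> space M. d \<le> X n \<omega> \<and> X n \<omega> \<le> 1 - d} \<le> real l * sq_incr n / \<kappa>^2"
proof -
  have "prob {\<omega> \<in> space M. d \<le> X n \<omega> \<and> X n \<omega> \<le> 1 - d}
      = prob {\<omega> \<in> space M. index_path n \<omega> \<in> {bs. d \<le> f bs \<and> f bs \<le> 1 - d}}"
    by (simp add: X_def)
  also have "\<dots> \<le> (\<Sum>bs\<in>index_lists l n. (f (bs @ [l - 1]) - f bs)^2 / \<kappa>^2) / real l ^ n"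
  proof (rule prob_index_path_in_le)
    fix bs assume "bs \<in> {bs. d \<le> f bs \<and> f bs \<le> 1 - d}" "bs \<in> index_lists l n"
    hence "\<kappa>^2 \<le> (f (bs @ [l - 1]) - f bs)^2"
      using gain[of bs] index_lists_set[of bs l n] k by (intro power_mono) auto
    thus "1 \<le> (f (bs @ [l - 1]) - f bs)^2 / \<kappa>^2" using k by simp
  qed auto
  also have "\<dots> \<le> (\<Sum>bs\<in>index_lists l n. \<Sum>i<l. (f (bs @ [i]) - f bs)^2) / \<kappa>^2 / real l ^ n"
    unfolding sum_divide_distrib[symmetric] using l_pos
    by (intro divide_right_mono sum_mono member_le_sum[of "l - 1" "{..<l}" "\<lambda>i. (f (_ @ [i]) - f _)^2"]) auto
  also have "\<dots> = real l * sq_incr n / \<kappa>^2"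
    using l_pos by (simp add: sum_sq_incr field_simps)
  finally show ?thesis .
qed

lemma summable_prob_jump:
  assumes "e > 0"
  shows "summable (\<lambda>n. prob {\<omega> \<in> space M. e \<le> \<bar>X (Suc n) \<omega> - X n \<omega>\<bar>})"
  by (rule summable_comparison_test'[OF summable_divide[OF summable_sq_incr], of 0])
     (use prob_jump_le[OF assms] in auto)

lemma summable_prob_middle:
  assumes "d > 0"
  shows "summable (\<lambda>n. prob {\<omega> \<in> space M. d \<le> X n \<omega> \<and> X n \<omega> \<le> 1 - d})"
proof -
  obtain \<kappa> where "\<kappa> > 0" "\<And>bs. set bs \<subseteq> {..<l} \<Longrightarrow> d \<le> f bs \<Longrightarrow> f bs \<le> 1 - d \<Longrightarrow> f (bs @ [l - 1]) \<ge> f bs + \<kappa>"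
    using last_child_gain[OF assms] by blast
  thus ?thesis
    by (intro summable_comparison_test'[OF summable_divide[OF summable_mult[OF summable_sq_incr]], of 0])
       (use prob_middle_le in auto)
qed

lemma AE_X_bounds: "AE \<omega> in M. \<forall>n. 0 \<le> X n \<omega> \<and> X n \<omega> \<le> 1"
  using AE_index_path_in_index_lists
proof eventually_elim
  case (elim \<omega>)
  thus ?case using bounded index_lists_set unfolding X_def by blast
qed

lemma AE_eventually_small_jump:
  assumes "e > 0"
  shows "AE \<omega> in M. \<forall>\<^sub>F n in sequentially. \<bar>X (Suc n) \<omega> - X n \<omega>\<bar> < e"
proof -
  have "AE \<omega> in M. \<forall>\<^sub>F n in sequentially. \<omega> \<in> space M - {\<omega> \<in> space M. e \<le> \<bar>X (Suc n) \<omega> - X n \<omega>\<bar>}"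
    by (rule borel_cantelli_AE1) (use summable_prob_jump[OF assms] in \<open>auto simp: emeasure_eq_measure\<close>)
  thus ?thesis by eventually_elim (auto elim!: eventually_mono)
qed

lemma AE_eventually_near_0_or_1:
  assumes "d > 0"
  shows "AE \<omega> in M. \<forall>\<^sub>F n in sequentially. X n \<omega> < d \<or> 1 - d < X n \<omega>"
proof -
  have "AE \<omega> in M. \<forall>\<^sub>F n in sequentially. \<omega> \<in> space M - {\<omega> \<in> space M. d \<le> X n \<omega> \<and> X n \<omega> \<le> 1 - d}"
    by (rule borel_cantelli_AE1) (use summable_prob_middle[OF assms] in \<open>auto simp: emeasure_eq_measure\<close>)
  thus ?thesis by eventually_elim (auto elim!: eventually_mono)
qed

lemma AE_X_tendsto_0_or_1: "AE \<omega> in M. (\<lambda>n. X n \<omega>) \<longlonglongrightarrow> 0 \<or> (\<lambda>n. X n \<omega>) \<longlonglongrightarrow> 1"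
proof -
  have "AE \<omega> in M. \<forall>e>0. \<forall>\<^sub>F n in sequentially. \<bar>X (Suc n) \<omega> - X n \<omega>\<bar> < e"
    by (rule AE_all_pos_eventually[OF AE_eventually_small_jump]) auto
  moreover have "AE \<omega> in M. \<forall>e>0. \<forall>\<^sub>F n in sequentially. X n \<omega> < e \<or> 1 - e < X n \<omega>"
    by (rule AE_all_pos_eventually[OF AE_eventually_near_0_or_1]) auto
  ultimately show ?thesis using AE_X_bounds
    by eventually_elim (intro tendsto_0_or_1_if_jumps_vanish; blast)
qed

lemma integral_X: "integral\<^sup>L M (X n) = f []"
  unfolding X_def integral_comp_index_path using sum_index_lists[of n] l_pos by simp

lemma polarization:
  "\<exists>I :: 'a \<Rightarrow> real. I \<in> borel_measurable M
    \<and> (AE \<omega> in M. (\<lambda>n. X n \<omega>) \<longlonglongrightarrow> I \<omega>)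
    \<and> (AE \<omega> in M. I \<omega> \<in> {0, 1})
    \<and> prob {\<omega> \<in> space M. I \<omega> = 1} = f []"
proof -
  define I where "I \<omega> = lim (\<lambda>n. X n \<omega>)" for \<omega>
  have I_meas [measurable]: "I \<in> borel_measurable M"
    unfolding I_def by (rule borel_measurable_lim_metric) (rule measurable_X)
  have AE_lim: "AE \<omega> in M. (\<lambda>n. X n \<omega>) \<longlonglongrightarrow> I \<omega> \<and> I \<omega> \<in> {0, 1}"
    using AE_X_tendsto_0_or_1 by eventually_elim (auto simp: I_def limI)
  \<comment> \<open>by dominated convergence, the constant expectations \<open>f []\<close> converge to \<open>E[I] = P(I = 1)\<close>\<close>
  have "(\<lambda>n. integral\<^sup>L M (X n)) \<longlonglongrightarrow> integral\<^sup>L M I"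
  proof (rule integral_dominated_convergence[where w="\<lambda>_. 1"])
    show "AE x in M. (\<lambda>n. X n x) \<longlonglongrightarrow> I x" using AE_lim by eventually_elim auto
    show "AE x in M. norm (X n x) \<le> 1" for n using AE_X_bounds by eventually_elim auto
  qed auto
  hence "integral\<^sup>L M I = f []" unfolding integral_X using LIMSEQ_unique tendsto_const by metis
  moreover have "integral\<^sup>L M I = integral\<^sup>L M (indicator {\<omega> \<in> space M. I \<omega> = 1})"
    by (rule integral_cong_AE) (use AE_lim AE_space in \<open>auto elim!: AE_mp simp: indicator_def\<close>)
  ultimately have "prob {\<omega> \<in> space M. I \<omega> = 1} = f []"
    by (simp add: Int_absorb2 Collect_subset)
  moreover have "AE \<omega> in M. (\<lambda>n. X n \<omega>) \<longlonglongrightarrow> I \<omega>" "AE \<omega> in M. I \<omega> \<in> {0, 1}"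
    using AE_lim by auto
  ultimately show ?thesis using I_meas by blast
qed

end

section \<open>Polarization of the symmetric capacities\<close>

lemma tree_martingale_sym_cap_synth_path:
  assumes "l \<ge> 1" "is_kernel l g" "is_channel W"
  shows "tree_martingale l (\<lambda>bs. sym_cap (synth_path l g W bs))"
  using assms sym_cap_bounds[OF is_channel_synth_path] sum_sym_cap_synth[OF is_channel_synth_path]
  by (unfold_locales) (auto simp: synth_path_snoc)

lemma sym_cap_synth_path_last_child_gain:
  assumes "l \<ge> 1" "is_kernel l g" "is_channel W"
    and "\<exists>u. length u = l - 1 \<and> hamming (g (u @ [False])) (g (u @ [True])) \<ge> 2" and "d > 0"
  shows "\<exists>\<kappa>>0. \<forall>bs. set bs \<subseteq> {..<l} \<longrightarrow> d \<le> sym_cap (synth_path l g W bs)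
    \<longrightarrow> sym_cap (synth_path l g W bs) \<le> 1 - d
    \<longrightarrow> sym_cap (synth_path l g W (bs @ [l - 1])) \<ge> sym_cap (synth_path l g W bs) + \<kappa>"
proof (intro exI conjI allI impI)
  show "d^3 * (2 * (ln 2)^2 / 9) / 2 ^ (l - 1) > 0" using assms(5) by simp
  fix bs assume "set bs \<subseteq> {..<l}" "d \<le> sym_cap (synth_path l g W bs)" "sym_cap (synth_path l g W bs) \<le> 1 - d"
  thus "sym_cap (synth_path l g W (bs @ [l - 1]))
      \<ge> sym_cap (synth_path l g W bs) + d^3 * (2 * (ln 2)^2 / 9) / 2 ^ (l - 1)"
    unfolding synth_path_snoc using assms
    by (intro sym_cap_synth_last_gain is_channel_synth_path) auto
qed

theorem proposition1:
  fixes l :: nat and g :: "bool list \<Rightarrow> bool list" and W :: "bool \<Rightarrow> 'y \<Rightarrow> real"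
    and M :: "'a measure" and B :: "nat \<Rightarrow> 'a \<Rightarrow> nat"
  assumes "l \<ge> 2"
    and "is_kernel l g"
    and "is_channel W"
    and "\<exists>u. length u = l - 1 \<and> hamming (g (u @ [False])) (g (u @ [True])) \<ge> 2"
    and "prob_space M"
    and "prob_space.indep_vars M (\<lambda>_. count_space UNIV) B {1..}"
    and "\<And>n. n \<ge> 1 \<Longrightarrow> distr M (count_space UNIV) (B n) = measure_pmf (pmf_of_set {..<l})"
  shows "\<exists>I_inf :: 'a \<Rightarrow> real. I_inf \<in> borel_measurable M
    \<and> (AE \<omega> in M. (\<lambda>n. sym_cap (chan_seq l g W B \<omega> n)) \<longlonglongrightarrow> I_inf \<omega>)
    \<and> (AE \<omega> in M. I_inf \<omega> \<in> {0, 1})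
    \<and> measure M {\<omega> \<in> space M. I_inf \<omega> = 1} = sym_cap W"
proof -
  have l: "l \<ge> 1" using assms(1) by simp
  have "uniform_indices M B l"
    using assms(5-7) l by (simp add: uniform_indices_def uniform_indices_axioms_def)
  moreover have "tree_martingale l (\<lambda>bs. sym_cap (synth_path l g W bs))"
    using tree_martingale_sym_cap_synth_path[OF l assms(2,3)] .
  moreover have "polarizing_tree_martingale_axioms l (\<lambda>bs. sym_cap (synth_path l g W bs))"
    using sym_cap_synth_path_last_child_gain[OF l assms(2-4)]
    unfolding polarizing_tree_martingale_axioms_def by blast
  ultimately interpret polarizing_tree_martingale M B l "\<lambda>bs. sym_cap (synth_path l g W bs)"
    by (intro polarizing_tree_martingale.intro)
  have "X n \<omega> = sym_cap (chan_seq l g W B \<omega> n)" for n \<omega>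
    unfolding X_def index_path_def chan_seq_eq_synth_path ..
  moreover have "sym_cap (synth_path l g W []) = sym_cap W"
    using sym_cap_lift_chan[OF assms(3)] by (simp add: synth_path_def)
  ultimately show ?thesis using polarization by simp
qed

end
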